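(* Let $\mu,\nu$ be finite measures on $\mathbb R$ with finite first moments such that $\mu\le_E\nu$. Define $\tilde P^\nu_\mu:\mathbb R\to\mathbb R$ by $\tilde P^\nu_\mu(k)=\min\{P_\nu(k),\,C_\nu(k)+(\mu(\mathbb R)k-\overline\mu)\}$. Then the counter-shadow $T^\nu(\mu)$ of $\mu$ in $\nu$ satisfies $P_{T^\nu(\mu)}=(\tilde P^\nu_\mu)^c$. In particular, $T^\nu(\mu)$ is the measure given by the second distributional derivative of $(\tilde P^\nu_\mu)^c$.
   Context: For a finite measure $\eta$ on $\mathbb R$ with finite first moment: $\overline\eta=\int x\,\eta(dx)$, $P_\eta(k)=\int(k-x)^+\eta(dx)$, $C_\eta(k)=\int(x-k)^+\eta(dx)$. For measures $\eta,\chi$: $\eta\le\chi$ means $\eta(A)\le\chi(A)$ for all Borel $A$; $\eta\le_{cx}\chi$ means $\int f\,d\eta\le\int f\,d\chi$ for all convex $f:\mathbb R\to\mathbb R$; $\eta\le_E\chi$ means $\int f\,d\eta\le\int f\,d\chi$ for all non-negative convex $f$. For $u:\mathbb R\to\mathbb R$, $u^c$ is the largest convex function below $u$. The counter-shadow $T^\nu(\mu)$ (for $\mu\le_E\nu$) is the measure, known to exist and be unique, such that $\mu\le_{cx}T^\nu(\mu)$, $T^\nu(\mu)\le\nu$, and every measure $\eta$ with $\mu\le_{cx}\eta\le\nu$ satisfies $\eta\le_{cx}T^\nu(\mu)$. *)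

theory Defs
  imports "HOL-Probability.Probability"
begin

definition fin_meas1 :: "real measure \<Rightarrow> bool" where
  "fin_meas1 M \<longleftrightarrow> sets M = sets borel \<and> finite_measure M \<and> integrable M (\<lambda>x. x)"

definition bary :: "real measure \<Rightarrow> real" where
  "bary M = (\<integral>x. x \<partial>M)"

definition putf :: "real measure \<Rightarrow> real \<Rightarrow> real" where
  "putf M k = (\<integral>x. max (k - x) 0 \<partial>M)"

definition callf :: "real measure \<Rightarrow> real \<Rightarrow> real" where
  "callf M k = (\<integral>x. max (x - k) 0 \<partial>M)"

text \<open>Extended-real valued integral (positive part minus negative part); for convex
  f and a finite measure with finite first moment the negative part is finite.\<close>
definition ext_int :: "real measure \<Rightarrow> (real \<Rightarrow> real) \<Rightarrow> ereal" where
  "ext_int M f = enn2ereal (\<integral>\<^sup>+x. ennreal (f x) \<partial>M) - enn2ereal (\<integral>\<^sup>+x. ennreal (- f x) \<partial>M)"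

definition meas_le :: "real measure \<Rightarrow> real measure \<Rightarrow> bool" where
  "meas_le M N \<longleftrightarrow> (\<forall>A\<in>sets borel. emeasure M A \<le> emeasure N A)"

definition cx_le :: "real measure \<Rightarrow> real measure \<Rightarrow> bool" where
  "cx_le M N \<longleftrightarrow> (\<forall>f::real \<Rightarrow> real. convex_on UNIV f \<longrightarrow> ext_int M f \<le> ext_int N f)"

definition E_le :: "real measure \<Rightarrow> real measure \<Rightarrow> bool" where
  "E_le M N \<longleftrightarrow> (\<forall>f::real \<Rightarrow> real. convex_on UNIV f \<longrightarrow> (\<forall>x. 0 \<le> f x) \<longrightarrow>
      (\<integral>\<^sup>+x. ennreal (f x) \<partial>M) \<le> (\<integral>\<^sup>+x. ennreal (f x) \<partial>N))"

definition convex_env :: "(real \<Rightarrow> real) \<Rightarrow> real \<Rightarrow> real" where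
  "convex_env u x = Sup {g x | g. convex_on UNIV g \<and> (\<forall>y. g y \<le> u y)}"

definition counter_shadow :: "real measure \<Rightarrow> real measure \<Rightarrow> real measure" where
  "counter_shadow \<nu> \<mu> = (THE \<eta>. sets \<eta> = sets borel \<and> cx_le \<mu> \<eta> \<and> meas_le \<eta> \<nu> \<and>
      (\<forall>\<eta>'. sets \<eta>' = sets borel \<longrightarrow> cx_le \<mu> \<eta>' \<longrightarrow> meas_le \<eta>' \<nu> \<longrightarrow> cx_le \<eta>' \<eta>))"

definition Ptilde :: "real measure \<Rightarrow> real measure \<Rightarrow> real \<Rightarrow> real" where
  "Ptilde \<nu> \<mu> k = min (putf \<nu> k) (callf \<nu> k + (measure \<mu> UNIV * k - bary \<mu>))"

end

theory Submission
  imports Defs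
begin

(* Every candidate \<eta> with \<mu> \<le>cx \<eta> \<le> \<nu> has the mass and barycentre of \<mu> and satisfies
  P_\<eta> \<le> P_\<nu> and C_\<eta> \<le> C_\<nu>; by put-call parity P_\<eta> \<le> Ptilde, and since P_\<eta> is convex,
  P_\<eta> \<le> (Ptilde)^c. Conversely, for measures of equal mass and barycentre an inequality between
  put functions implies the convex order: after subtracting a supporting line, a convex function
  splits into a nondecreasing and a nonincreasing convex part, which are limits from below of
  nonnegative combinations of call, respectively put, payoffs. So it suffices to find one
  \<eta> \<le> \<nu> with the mass and barycentre of \<mu> and P_\<eta> = (Ptilde)^c. It is then the
  counter-shadow, which is unique because the right derivative of P_\<eta> is the distribution
  function of \<eta>; this also gives the second claim.

  If 0 < \<mu>(R) < \<nu>(R), write \<nu> as the image of \<nu>(R) times Lebesgue measure on (0,1) under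
  its quantile function and drop the levels in a window [p, p + \<delta>) of length
  \<delta> = 1 - \<mu>(R) / \<nu>(R), with p chosen by the intermediate value theorem so that the
  barycentre is that of \<mu>. Then P_\<eta> equals P_\<nu> left of the window, C_\<nu> + \<mu>(R) k - bary \<mu>
  right of it, and is affine in between, which forces P_\<eta> = (Ptilde)^c. If \<mu>(R) = 0 take
  \<eta> = \<mu>, and if \<mu>(R) = \<nu>(R) take \<eta> = \<nu>. *)

section \<open>Convex functions on the real line\<close>

lemma convex_on_pos_part_affine: "convex_on UNIV (\<lambda>x::real. max (a * x + c) 0)"
proof (rule convex_onI)
  fix t x y :: real assume t: "0 < t" "t < 1"
  have "a * ((1 - t) *\<^sub>R x + t *\<^sub>R y) + c = (1 - t) * (a * x + c) + t * (a * y + c)"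
    by (simp add: algebra_simps)
  also have "\<dots> \<le> (1 - t) * max (a * x + c) 0 + t * max (a * y + c) 0"
    using t by (intro add_mono mult_left_mono) auto
  finally show "max (a * ((1 - t) *\<^sub>R x + t *\<^sub>R y) + c) 0 \<le> (1 - t) * max (a * x + c) 0 + t * max (a * y + c) 0"
    using t by (intro max.boundedI) auto
qed auto

lemma convex_on_put_payoff: "convex_on UNIV (\<lambda>x::real. max (k - x) 0)"
  using convex_on_pos_part_affine[of "-1" k] by simp

lemma convex_on_call_payoff: "convex_on UNIV (\<lambda>x::real. max (x - k) 0)"
  using convex_on_pos_part_affine[of 1 "-k"] by simp

lemma convex_on_affine: "convex_on UNIV (\<lambda>x::real. a * x + c)"
  by (rule convex_onI) (auto simp: algebra_simps)

lemma convex_on_slope_mono: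
  fixes f :: "real \<Rightarrow> real"
  assumes "convex_on UNIV f" "x < t" "t < y"
  shows "(f t - f x) / (t - x) \<le> (f y - f t) / (y - t)"
proof -
  have "(f x - f t) / (x - t) \<le> (f t - f y) / (t - y)"
    using convex_on_slope_le[OF assms(1) _ _ assms(2,3)] by (meson UNIV_I order_trans)
  then show ?thesis
    by (metis minus_diff_eq divide_minus_left divide_minus_right minus_minus)
qed

lemma convex_on_le_affine_approx:
  fixes \<psi> :: "real \<Rightarrow> real"
  assumes cvx: "convex_on UNIV \<psi>"
    and left: "\<And>e. 0 < e \<Longrightarrow> \<exists>y\<le>k. \<psi> y \<le> a * y + c + e"
    and right: "\<And>e. 0 < e \<Longrightarrow> \<exists>z\<ge>k. \<psi> z \<le> a * z + c + e"
  shows "\<psi> k \<le> a * k + c"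
proof (rule field_le_epsilon)
  fix e :: real assume "0 < e"
  then obtain y z where y: "y \<le> k" "\<psi> y \<le> a * y + c + e" and z: "k \<le> z" "\<psi> z \<le> a * z + c + e"
    using left right by blast
  have "convex_on UNIV (\<lambda>x. \<psi> x + (- a * x + - c))"
    by (intro convex_on_add cvx convex_on_affine)
  then have "convex_on UNIV (\<lambda>x. \<psi> x - (a * x + c))"
    by (simp add: algebra_simps)
  then have "convex_on {y..z} (\<lambda>x. \<psi> x - (a * x + c))"
    by (rule convex_on_subset) auto
  then have "\<psi> k - (a * k + c) \<le> max (\<psi> y - (a * y + c)) (\<psi> z - (a * z + c))"
    using y z by (intro convex_on_le_max) auto
  then show "\<psi> k \<le> a * k + c + e"
    using y z by linarith
qed

section \<open>Put and call functions\<close>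

lemma fin_meas1_sets: "fin_meas1 M \<Longrightarrow> sets M = sets borel"
  by (simp add: fin_meas1_def)

lemma fin_meas1_space: "fin_meas1 M \<Longrightarrow> space M = UNIV"
  using sets_eq_imp_space_eq[OF fin_meas1_sets[of M]] by simp

lemma fin_meas1_finite_measure: "fin_meas1 M \<Longrightarrow> finite_measure M"
  by (simp add: fin_meas1_def)

lemma fin_meas1_integrable_ident: "fin_meas1 M \<Longrightarrow> integrable M (\<lambda>x. x)"
  by (simp add: fin_meas1_def)

lemma fin_meas1_measurable: "fin_meas1 M \<Longrightarrow> f \<in> borel_measurable borel \<Longrightarrow> f \<in> borel_measurable M"
  by (simp add: measurable_cong_sets[OF fin_meas1_sets[of M] refl])

lemma fin_meas1_emeasure_finite: "fin_meas1 M \<Longrightarrow> emeasure M A < \<infinity>"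
  using finite_measure.emeasure_finite[OF fin_meas1_finite_measure, of M A] by (simp add: less_top)

lemma fin_meas1_integrable_const: "fin_meas1 M \<Longrightarrow> integrable M (\<lambda>x. c::real)"
  by (rule finite_measure.integrable_const[OF fin_meas1_finite_measure])

lemma fin_meas1_integrable_affine: "fin_meas1 M \<Longrightarrow> integrable M (\<lambda>x. a * x + c::real)"
  using fin_meas1_integrable_ident[of M] fin_meas1_integrable_const[of M c] by simp

lemma fin_meas1_integral_affine:
  "fin_meas1 M \<Longrightarrow> (\<integral>x. a * x + c \<partial>M) = a * bary M + c * measure M UNIV"
  using fin_meas1_integrable_ident[of M] fin_meas1_integrable_const[of M c] fin_meas1_space[of M]
  by (simp add: bary_def)

lemma fin_meas1_integrable_put: "fin_meas1 M \<Longrightarrow> integrable M (\<lambda>x. max (k - x) 0)"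
  using fin_meas1_integrable_affine[of M "-1" k] by (intro integrable_max integrable_zero) simp_all

lemma fin_meas1_integrable_call: "fin_meas1 M \<Longrightarrow> integrable M (\<lambda>x. max (x - k) 0)"
  using fin_meas1_integrable_affine[of M 1 "-k"] by (intro integrable_max integrable_zero) simp_all

lemma put_call_parity: "fin_meas1 M \<Longrightarrow> putf M k = callf M k + measure M UNIV * k - bary M"
proof -
  assume M: "fin_meas1 M"
  have "putf M k = (\<integral>x. max (x - k) 0 + ((- 1) * x + k) \<partial>M)"
    unfolding putf_def by (rule Bochner_Integration.integral_cong) auto
  also have "\<dots> = callf M k + (\<integral>x. (- 1) * x + k \<partial>M)"
    unfolding callf_def
    by (rule Bochner_Integration.integral_add[OF fin_meas1_integrable_call[OF M] fin_meas1_integrable_affine[OF M]])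
  also have "\<dots> = callf M k + measure M UNIV * k - bary M"
    unfolding fin_meas1_integral_affine[OF M] by simp
  finally show ?thesis .
qed

lemma putf_nonneg: "0 \<le> putf M k"
  unfolding putf_def by (rule Bochner_Integration.integral_nonneg) auto

lemma callf_nonneg: "0 \<le> callf M k"
  unfolding callf_def by (rule Bochner_Integration.integral_nonneg) auto

lemma putf_mono: "fin_meas1 M \<Longrightarrow> k \<le> k' \<Longrightarrow> putf M k \<le> putf M k'"
  unfolding putf_def by (intro integral_mono fin_meas1_integrable_put) auto

lemma callf_antimono: "fin_meas1 M \<Longrightarrow> k \<le> k' \<Longrightarrow> callf M k' \<le> callf M k"
  unfolding callf_def by (intro integral_mono fin_meas1_integrable_call) auto

lemma putf_ge_affine: "fin_meas1 M \<Longrightarrow> measure M UNIV * k - bary M \<le> putf M k"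
  using put_call_parity[of M k] callf_nonneg[of M k] by simp

lemma callf_ge_affine: "fin_meas1 M \<Longrightarrow> bary M - measure M UNIV * k \<le> callf M k"
  using put_call_parity[of M k] putf_nonneg[of M k] by simp

lemma convex_on_putf: "fin_meas1 M \<Longrightarrow> convex_on UNIV (putf M)"
proof (rule convex_onI)
  fix t x y :: real assume M: "fin_meas1 M" and t: "0 < t" "t < 1"
  have "putf M ((1 - t) *\<^sub>R x + t *\<^sub>R y) \<le> (\<integral>z. (1 - t) * max (x - z) 0 + t * max (y - z) 0 \<partial>M)"
    unfolding putf_def
  proof (intro integral_mono fin_meas1_integrable_put M)
    show "integrable M (\<lambda>z. (1 - t) * max (x - z) 0 + t * max (y - z) 0)"
      using fin_meas1_integrable_put[OF M] by auto
    show "max ((1 - t) *\<^sub>R x + t *\<^sub>R y - z) 0 \<le> (1 - t) * max (x - z) 0 + t * max (y - z) 0" for z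
      using convex_onD[OF convex_on_call_payoff[of z], of t x y] t by simp
  qed
  also have "\<dots> = (1 - t) * putf M x + t * putf M y"
    unfolding putf_def using fin_meas1_integrable_put[OF M] by simp
  finally show "putf M ((1 - t) *\<^sub>R x + t *\<^sub>R y) \<le> (1 - t) * putf M x + t * putf M y" .
qed auto

lemma integral_excess_tendsto_0:
  fixes f :: "'a \<Rightarrow> real"
  assumes "integrable M f"
  shows "(\<lambda>i. \<integral>x. max (f x - real i) 0 \<partial>M) \<longlonglongrightarrow> 0"
proof -
  have "(\<lambda>i. \<integral>x. max (f x - real i) 0 \<partial>M) \<longlonglongrightarrow> (\<integral>x. 0 \<partial>M)"
  proof (rule integral_dominated_convergence[where w="\<lambda>x. norm (f x)"])
    show "integrable M (\<lambda>x. norm (f x))" using assms by simp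
    have "eventually (\<lambda>i. max (f x - real i) 0 = 0) sequentially" for x
      using eventually_ge_at_top[of "nat \<lceil>f x\<rceil>"] by eventually_elim linarith
    then show "AE x in M. (\<lambda>i. max (f x - real i) 0) \<longlonglongrightarrow> 0"
      by (intro AE_I2 tendsto_eventually)
  qed (use assms in auto)
  then show ?thesis by simp
qed

lemma ex_le_putf_less:
  assumes M: "fin_meas1 M" and e: "0 < e" shows "\<exists>y\<le>k. putf M y < e"
proof -
  have "(\<integral>x. max (- x - real i) 0 \<partial>M) = putf M (- real i)" for i
    unfolding putf_def by (rule Bochner_Integration.integral_cong) auto
  then have "(\<lambda>i. putf M (- real i)) \<longlonglongrightarrow> 0"
    using integral_excess_tendsto_0[of M uminus] fin_meas1_integrable_ident[OF M] by simp
  then obtain i where i: "putf M (- real i) < e"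
    using order_tendstoD(2)[OF _ e] by (metis eventually_sequentially order.refl)
  have "putf M (min k (- real i)) \<le> putf M (- real i)" by (intro putf_mono M) simp
  then show ?thesis using i by (intro exI[of _ "min k (- real i)"]) auto
qed

lemma ex_ge_callf_less:
  assumes M: "fin_meas1 M" and e: "0 < e" shows "\<exists>z\<ge>k. callf M z < e"
proof -
  have "(\<lambda>i. callf M (real i)) \<longlonglongrightarrow> 0"
    using integral_excess_tendsto_0[of M "\<lambda>x. x"] fin_meas1_integrable_ident[OF M]
    by (simp add: callf_def)
  then obtain i where i: "callf M (real i) < e"
    using order_tendstoD(2)[OF _ e] by (metis eventually_sequentially order.refl)
  have "callf M (max k (real i)) \<le> callf M (real i)" by (intro callf_antimono M) simp
  then show ?thesis using i by (intro exI[of _ "max k (real i)"]) auto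
qed

lemma nn_integral_put_payoff:
  "fin_meas1 M \<Longrightarrow> (\<integral>\<^sup>+x. ennreal (max (k - x) 0) \<partial>M) = ennreal (putf M k)"
  unfolding putf_def by (rule nn_integral_eq_integral) (auto intro: fin_meas1_integrable_put)

lemma nn_integral_call_payoff:
  "fin_meas1 M \<Longrightarrow> (\<integral>\<^sup>+x. ennreal (max (x - k) 0) \<partial>M) = ennreal (callf M k)"
  unfolding callf_def by (rule nn_integral_eq_integral) (auto intro: fin_meas1_integrable_call)

lemma E_le_putf: "fin_meas1 \<mu> \<Longrightarrow> fin_meas1 \<nu> \<Longrightarrow> E_le \<mu> \<nu> \<Longrightarrow> putf \<mu> k \<le> putf \<nu> k"
  unfolding E_le_def
  using convex_on_put_payoff[of k] nn_integral_put_payoff[of \<mu> k] nn_integral_put_payoff[of \<nu> k]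
  by (auto simp: ennreal_le_iff putf_nonneg)

lemma E_le_callf: "fin_meas1 \<mu> \<Longrightarrow> fin_meas1 \<nu> \<Longrightarrow> E_le \<mu> \<nu> \<Longrightarrow> callf \<mu> k \<le> callf \<nu> k"
  unfolding E_le_def
  using convex_on_call_payoff[of k] nn_integral_call_payoff[of \<mu> k] nn_integral_call_payoff[of \<nu> k]
  by (auto simp: ennreal_le_iff callf_nonneg)

lemma E_le_measure_UNIV:
  assumes \<mu>: "fin_meas1 \<mu>" and \<nu>: "fin_meas1 \<nu>" and E: "E_le \<mu> \<nu>"
  shows "measure \<mu> UNIV \<le> measure \<nu> UNIV"
proof -
  have "(\<integral>\<^sup>+x. ennreal 1 \<partial>\<mu>) \<le> (\<integral>\<^sup>+x. ennreal 1 \<partial>\<nu>)"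
    using E convex_on_const[of UNIV "1::real"] unfolding E_le_def by fastforce
  then show ?thesis
    using fin_meas1_space[OF \<mu>] fin_meas1_space[OF \<nu>]
      fin_meas1_emeasure_finite[OF \<mu>, of UNIV] fin_meas1_emeasure_finite[OF \<nu>, of UNIV]
    by (simp add: emeasure_eq_ennreal_measure less_top)
qed

lemma enn2ereal_eq_ereal_enn2real: "(A::ennreal) < \<infinity> \<Longrightarrow> enn2ereal A = ereal (enn2real A)"
  by (metis enn2ereal_ennreal enn2real_nonneg ennreal_enn2real infinity_ennreal_def)

lemma ext_int_eq_integral:
  assumes "integrable M f" shows "ext_int M f = ereal (integral\<^sup>L M f)"
proof -
  have bound: "(\<integral>\<^sup>+x. ennreal (norm (f x)) \<partial>M) < \<infinity>"
    using assms by (simp add: integrable_iff_bounded)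
  have "(\<integral>\<^sup>+x. ennreal (f x) \<partial>M) < \<infinity>" "(\<integral>\<^sup>+x. ennreal (- f x) \<partial>M) < \<infinity>"
    by (rule le_less_trans[OF _ bound], intro nn_integral_mono, simp)+
  then show ?thesis
    unfolding ext_int_def real_lebesgue_integral_def[OF assms]
    by (simp add: enn2ereal_eq_ereal_enn2real)
qed

lemma ext_int_nonneg_plus_affine:
  assumes M: "fin_meas1 M" and h_nonneg: "\<And>x. 0 \<le> h x" and h_meas: "h \<in> borel_measurable borel"
  shows "ext_int M (\<lambda>x. h x + (a * x + c))
    = enn2ereal (\<integral>\<^sup>+x. ennreal (h x) \<partial>M) + ereal (a * bary M + c * measure M UNIV)"
proof (cases "(\<integral>\<^sup>+x. ennreal (h x) \<partial>M) < \<infinity>")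
  case True
  have "integrable M h"
    using True h_nonneg fin_meas1_measurable[OF M h_meas] by (intro integrableI_bounded) auto
  then have "ext_int M (\<lambda>x. h x + (a * x + c)) = ereal (integral\<^sup>L M h + (a * bary M + c * measure M UNIV))"
    using fin_meas1_integrable_affine[OF M] fin_meas1_integral_affine[OF M]
    by (simp add: ext_int_eq_integral)
  also have "integral\<^sup>L M h = enn2real (\<integral>\<^sup>+x. ennreal (h x) \<partial>M)"
    using fin_meas1_measurable[OF M h_meas] h_nonneg by (simp add: integral_eq_nn_integral)
  finally show ?thesis using True by (simp add: enn2ereal_eq_ereal_enn2real)
next
  case False
  let ?f = "\<lambda>x. h x + (a * x + c)" and ?A = "\<lambda>x. norm (a * x + c)"
  have A_finite: "(\<integral>\<^sup>+x. ennreal (?A x) \<partial>M) < \<infinity>"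
    using fin_meas1_integrable_affine[OF M] by (simp add: integrable_iff_bounded)
  have "(\<integral>\<^sup>+x. ennreal (h x) \<partial>M) \<le> (\<integral>\<^sup>+x. ennreal (?f x) + ennreal (?A x) \<partial>M)"
  proof (intro nn_integral_mono)
    fix x
    have "ennreal (h x) \<le> ennreal (max (?f x) 0 + ?A x)" by (intro ennreal_leI) auto
    also have "\<dots> = ennreal (?f x) + ennreal (?A x)" by (subst ennreal_plus) (auto simp: max_def ennreal_neg)
    finally show "ennreal (h x) \<le> ennreal (?f x) + ennreal (?A x)" .
  qed
  also have "\<dots> = (\<integral>\<^sup>+x. ennreal (?f x) \<partial>M) + (\<integral>\<^sup>+x. ennreal (?A x) \<partial>M)"
    using h_meas by (intro nn_integral_add fin_meas1_measurable[OF M]; measurable)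
  finally have "(\<integral>\<^sup>+x. ennreal (?f x) \<partial>M) + (\<integral>\<^sup>+x. ennreal (?A x) \<partial>M) = \<infinity>"
    using False by (simp add: less_top[symmetric] top_unique)
  then have "(\<integral>\<^sup>+x. ennreal (?f x) \<partial>M) = \<infinity>"
    using A_finite by (auto simp: ennreal_add_eq_top)
  moreover have "(\<integral>\<^sup>+x. ennreal (- ?f x) \<partial>M) < \<infinity>"
    by (rule le_less_trans[OF _ A_finite], intro nn_integral_mono ennreal_leI)
      (smt (verit) h_nonneg abs_ge_minus_self real_norm_def)
  ultimately show ?thesis
    using False by (simp add: ext_int_def enn2ereal_eq_ereal_enn2real less_top[symmetric])
qed

lemma meas_le_imp_le:
  assumes \<nu>: "fin_meas1 \<nu>" and sets_\<eta>: "sets \<eta> = sets borel" and le: "meas_le \<eta> \<nu>"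
  shows "\<eta> \<le> \<nu>"
proof -
  have "emeasure \<eta> A \<le> emeasure \<nu> A" for A
    using le sets_\<eta> by (cases "A \<in> sets borel") (auto simp: meas_le_def emeasure_notin_sets)
  then show ?thesis
    using \<nu> sets_\<eta> sets_eq_imp_space_eq[OF sets_\<eta>] fin_meas1_space[OF \<nu>]
    by (simp add: le_measure_iff fin_meas1_sets le_fun_def)
qed

lemma meas_le_fin_meas1:
  assumes \<nu>: "fin_meas1 \<nu>" and sets_\<eta>: "sets \<eta> = sets borel" and le: "meas_le \<eta> \<nu>"
  shows "fin_meas1 \<eta>"
proof -
  have sets_eq: "sets \<eta> = sets \<nu>" using \<nu> sets_\<eta> fin_meas1_sets by auto
  note \<eta>_le = meas_le_imp_le[OF assms]
  have "emeasure \<eta> (space \<eta>) < \<infinity>"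
    using le sets_\<eta> fin_meas1_emeasure_finite[OF \<nu>, of "space \<eta>"]
    by (auto simp: meas_le_def intro: le_less_trans)
  then have "finite_measure \<eta>" by (intro finite_measureI) (simp add: less_top)
  moreover have "(\<integral>\<^sup>+x. ennreal (norm x) \<partial>\<eta>) < \<infinity>"
    using nn_integral_mono_measure[OF sets_eq \<eta>_le] fin_meas1_integrable_ident[OF \<nu>]
    by (auto simp: integrable_iff_bounded intro: le_less_trans)
  then have "integrable \<eta> (\<lambda>x. x)"
    by (intro integrableI_bounded) (auto simp: measurable_cong_sets[OF sets_\<eta> refl])
  ultimately show ?thesis using sets_\<eta> by (simp add: fin_meas1_def)
qed

lemma meas_le_putf_callf:
  assumes \<nu>: "fin_meas1 \<nu>" and sets_\<eta>: "sets \<eta> = sets borel" and le: "meas_le \<eta> \<nu>"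
  shows "putf \<eta> k \<le> putf \<nu> k" "callf \<eta> k \<le> callf \<nu> k"
proof -
  have sets_eq: "sets \<eta> = sets \<nu>" using \<nu> sets_\<eta> fin_meas1_sets by auto
  note \<eta>_le = meas_le_imp_le[OF assms] and \<eta> = meas_le_fin_meas1[OF assms]
  show "putf \<eta> k \<le> putf \<nu> k"
    using nn_integral_mono_measure[OF sets_eq \<eta>_le, of "\<lambda>x. ennreal (max (k - x) 0)"]
    unfolding nn_integral_put_payoff[OF \<eta>] nn_integral_put_payoff[OF \<nu>]
    by (simp add: ennreal_le_iff putf_nonneg)
  show "callf \<eta> k \<le> callf \<nu> k"
    using nn_integral_mono_measure[OF sets_eq \<eta>_le, of "\<lambda>x. ennreal (max (x - k) 0)"]
    unfolding nn_integral_call_payoff[OF \<eta>] nn_integral_call_payoff[OF \<nu>]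
    by (simp add: ennreal_le_iff callf_nonneg)
qed

lemma cx_le_measure_bary_eq:
  assumes \<mu>: "fin_meas1 \<mu>" and \<eta>: "fin_meas1 \<eta>" and cx: "cx_le \<mu> \<eta>"
  shows "measure \<mu> UNIV = measure \<eta> UNIV" "bary \<mu> = bary \<eta>"
proof -
  have "ext_int \<mu> (\<lambda>x. a * x + c) \<le> ext_int \<eta> (\<lambda>x. a * x + c)" for a c
    using cx convex_on_affine unfolding cx_le_def by blast
  then have "a * bary \<mu> + c * measure \<mu> UNIV \<le> a * bary \<eta> + c * measure \<eta> UNIV" for a c
    by (simp add: ext_int_eq_integral fin_meas1_integrable_affine fin_meas1_integral_affine \<mu> \<eta>)
  from this[of 0 1] this[of 0 "-1"] this[of 1 0] this[of "-1" 0]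
  show "measure \<mu> UNIV = measure \<eta> UNIV" "bary \<mu> = bary \<eta>" by auto
qed

lemma cx_le_putf:
  assumes "fin_meas1 M" "fin_meas1 N" "cx_le M N"
  shows "putf M k \<le> putf N k"
proof -
  have "ext_int M (\<lambda>x. max (k - x) 0) \<le> ext_int N (\<lambda>x. max (k - x) 0)"
    using assms(3) convex_on_put_payoff unfolding cx_le_def by blast
  then show ?thesis
    using assms(1,2) by (simp add: ext_int_eq_integral fin_meas1_integrable_put putf_def)
qed

section \<open>The put function determines the measure\<close>

lemma putf_right_slope_tendsto:
  assumes M: "fin_meas1 M"
  shows "((\<lambda>y. (putf M y - putf M a) / (y - a)) \<longlongrightarrow> measure M {..a}) (at_right a)"
  unfolding tendsto_at_iff_sequentially
proof (intro allI impI)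
  fix X :: "nat \<Rightarrow> real" assume X: "\<forall>i. X i \<in> {a<..} - {a}" "X \<longlonglongrightarrow> a"
  have Xa: "a < X i" for i using X(1) by auto
  define g where "g i x = (max (X i - x) 0 - max (a - x) 0) / (X i - a)" for i x
  have slope_eq: "(putf M (X i) - putf M a) / (X i - a) = integral\<^sup>L M (g i)" for i
    unfolding putf_def g_def
    using fin_meas1_integrable_put[OF M, of "X i"] fin_meas1_integrable_put[OF M, of a] by simp
  have "(\<lambda>i. integral\<^sup>L M (g i)) \<longlonglongrightarrow> integral\<^sup>L M (indicator {..a} :: real \<Rightarrow> real)"
  proof (rule integral_dominated_convergence[where w="\<lambda>x. 1"])
    show "integrable M (\<lambda>x. 1::real)" by (rule fin_meas1_integrable_const[OF M])
    show "indicator {..a} \<in> borel_measurable M" "g i \<in> borel_measurable M" for i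
      unfolding g_def by (rule fin_meas1_measurable[OF M], simp)+
    have "(\<lambda>i. g i x) \<longlonglongrightarrow> indicator {..a} x" for x
    proof (cases "x \<le> a")
      case True
      then have "g i x = 1" for i using Xa[of i] by (simp add: g_def)
      then show ?thesis using True by simp
    next
      case False
      then have "eventually (\<lambda>i. X i < x) sequentially" using order_tendstoD(2)[OF X(2)] by simp
      then have "eventually (\<lambda>i. g i x = 0) sequentially"
        by eventually_elim (use False in \<open>simp add: g_def\<close>)
      then show ?thesis using False by (simp add: tendsto_eventually)
    qed
    then show "AE x in M. (\<lambda>i. g i x) \<longlonglongrightarrow> indicator {..a} x" by simp
    have "\<bar>max (X i - x) 0 - max (a - x) 0\<bar> \<le> X i - a" for i x using Xa[of i] by auto
    then show "AE x in M. norm (g i x) \<le> 1" for i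
      using Xa[of i] by (simp add: g_def abs_div_pos)
  qed
  also have "integral\<^sup>L M (indicator {..a} :: real \<Rightarrow> real) = measure M {..a}"
    using fin_meas1_emeasure_finite[OF M, of "{..a}"] fin_meas1_sets[OF M] by (simp add: less_top)
  finally show "((\<lambda>y. (putf M y - putf M a) / (y - a)) \<circ> X) \<longlonglongrightarrow> measure M {..a}"
    by (simp add: o_def slope_eq)
qed

lemma fin_meas1_eqI_putf:
  assumes M: "fin_meas1 M" and N: "fin_meas1 N"
    and mass: "measure M UNIV = measure N UNIV" and put: "putf M = putf N"
  shows "M = N"
proof (rule measure_eqI_lessThan)
  show "sets M = sets borel" "sets N = sets borel" using M N by (simp_all add: fin_meas1_sets)
  show "emeasure M {x<..} < \<infinity>" for x using fin_meas1_emeasure_finite[OF M] .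
  fix x :: real
  have cdf: "measure M {..x} = measure N {..x}"
    using putf_right_slope_tendsto[OF M, of x] putf_right_slope_tendsto[OF N, of x]
    unfolding put by (rule tendsto_unique[rotated]) simp
  have "measure L {x<..} = measure L UNIV - measure L {..x}" if L: "fin_meas1 L" for L
  proof -
    have "{x<..} = space L - {..x}" using fin_meas1_space[OF L] by auto
    then show ?thesis
      using finite_measure.finite_measure_compl[OF fin_meas1_finite_measure[OF L], of "{..x}"]
        fin_meas1_sets[OF L] fin_meas1_space[OF L] by simp
  qed
  then have "measure M {x<..} = measure N {x<..}" using M N mass cdf by simp
  then show "emeasure M {x<..} = emeasure N {x<..}"
    using M N by (simp add: finite_measure.emeasure_eq_measure fin_meas1_finite_measure)
qed

lemma measure_Ioc_eq_putf_slope_diff: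
  assumes M: "fin_meas1 M" and ab: "a \<le> b"
  shows "\<exists>da db. ((\<lambda>y. (putf M y - putf M a) / (y - a)) \<longlongrightarrow> da) (at_right a)
    \<and> ((\<lambda>y. (putf M y - putf M b) / (y - b)) \<longlongrightarrow> db) (at_right b)
    \<and> measure M {a<..b} = db - da"
proof (intro exI conjI)
  show "((\<lambda>y. (putf M y - putf M a) / (y - a)) \<longlongrightarrow> measure M {..a}) (at_right a)"
    "((\<lambda>y. (putf M y - putf M b) / (y - b)) \<longlongrightarrow> measure M {..b}) (at_right b)"
    by (rule putf_right_slope_tendsto[OF M])+
  have "{a<..b} = {..b} - {..a}" by auto
  then show "measure M {a<..b} = measure M {..b} - measure M {..a}"
    using finite_measure.finite_measure_Diff[OF fin_meas1_finite_measure[OF M], of "{..b}" "{..a}"]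
      fin_meas1_sets[OF M] ab by simp
qed

section \<open>Convex order from put functions\<close>

locale convex_grid =
  fixes h :: "real \<Rightarrow> real" and x0 d :: real
  assumes convex: "convex_on UNIV h" and mono: "mono h"
    and vanish: "\<And>x. x \<le> x0 \<Longrightarrow> h x = 0" and d_pos: "0 < d"
begin

definition knot :: "nat \<Rightarrow> real" where "knot i = x0 + real i * d"

definition slope :: "nat \<Rightarrow> real" where "slope i = (h (knot i) - h (knot i - d)) / d"

(* The chord interpolant of h on the grid, shifted right by one mesh width, written as a
  nonnegative combination of call payoffs. *)
definition interp :: "nat \<Rightarrow> real \<Rightarrow> real" where
  "interp N y = (\<Sum>i\<in>{1..N}. (slope i - slope (i - 1)) * max (y - knot i) 0)"

lemma nonneg: "0 \<le> h x"
  using monoD[OF mono, of "min x x0" x] vanish[of "min x x0"] by simp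

lemma knot_Suc: "knot (Suc i) = knot i + d"
  by (simp add: knot_def algebra_simps)

lemma knot_mono: "i \<le> j \<Longrightarrow> knot i \<le> knot j"
  using d_pos by (simp add: knot_def mult_right_mono)

lemma slope_0: "slope 0 = 0"
  using vanish[of x0] vanish[of "x0 - d"] d_pos by (simp add: slope_def knot_def)

lemma slope_nonneg: "0 \<le> slope i"
  using mono d_pos unfolding slope_def by (simp add: monoD)

lemma slope_mono: "i \<le> j \<Longrightarrow> slope i \<le> slope j"
proof (induction rule: dec_induct)
  case (step j)
  have "slope j \<le> (h (knot j + d) - h (knot j)) / (knot j + d - knot j)"
    unfolding slope_def using convex_on_slope_mono[OF convex, of "knot j - d" "knot j" "knot j + d"] d_pos
    by simp
  then show ?case using step.IH by (simp add: slope_def knot_Suc)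
qed simp

lemma slope_times_d: "slope i * d = h (knot i) - h (knot i - d)"
  using d_pos by (simp add: slope_def)

lemma interp_Suc: "interp (Suc N) y = interp N y + (slope (Suc N) - slope N) * max (y - knot (Suc N)) 0"
  unfolding interp_def by simp

lemma interp_right: "knot N \<le> y \<Longrightarrow> interp N y = h (knot N - d) + slope N * (y - knot N)"
proof (induction N arbitrary: y)
  case 0
  then show ?case using vanish[of "x0 - d"] d_pos by (simp add: interp_def slope_0 knot_def)
next
  case (Suc N)
  have y: "knot N \<le> y" using Suc.prems knot_mono[of N "Suc N"] by simp
  have "interp (Suc N) y = h (knot N - d) + slope N * (y - knot N) + (slope (Suc N) - slope N) * (y - knot (Suc N))"
    using Suc.IH[OF y] Suc.prems by (simp add: interp_Suc)
  also have "\<dots> = h (knot N - d) + slope N * d + slope (Suc N) * (y - knot (Suc N))"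
    by (simp add: knot_Suc algebra_simps)
  also have "\<dots> = h (knot (Suc N) - d) + slope (Suc N) * (y - knot (Suc N))"
    by (simp add: slope_times_d knot_Suc)
  finally show ?case .
qed

lemma interp_stable: "K \<le> N \<Longrightarrow> y \<le> knot (Suc K) \<Longrightarrow> interp N y = interp K y"
proof (induction N rule: dec_induct)
  case (step n)
  have "y \<le> knot (Suc n)" using step knot_mono[of "Suc K" "Suc n"] by simp
  then show ?case using step by (simp add: interp_Suc)
qed simp

lemma interp_on_cell:
  "K \<le> N \<Longrightarrow> knot K \<le> y \<Longrightarrow> K = N \<or> y \<le> knot (Suc K) \<Longrightarrow>
    interp N y = h (knot K - d) + slope K * (y - knot K)"
  using interp_stable interp_right by metis

lemma knot_floor:
  assumes "x0 \<le> y"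
  shows "knot (nat \<lfloor>(y - x0) / d\<rfloor>) \<le> y" "y < knot (Suc (nat \<lfloor>(y - x0) / d\<rfloor>))"
proof -
  have q: "0 \<le> (y - x0) / d" using assms d_pos by simp
  then have "real (nat \<lfloor>(y - x0) / d\<rfloor>) \<le> (y - x0) / d" "(y - x0) / d < real (nat \<lfloor>(y - x0) / d\<rfloor>) + 1"
    by linarith+
  then show "knot (nat \<lfloor>(y - x0) / d\<rfloor>) \<le> y" "y < knot (Suc (nat \<lfloor>(y - x0) / d\<rfloor>))"
    using d_pos by (simp_all add: knot_def field_simps)
qed

lemma interp_le: "interp N y \<le> h y"
proof (cases "x0 \<le> y")
  case False
  have "interp N y = interp 0 y" using False d_pos by (intro interp_stable) (auto simp: knot_def)
  then show ?thesis using nonneg by (simp add: interp_def)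
next
  case True
  define K where "K = min N (nat \<lfloor>(y - x0) / d\<rfloor>)"
  have K: "K \<le> N" "knot K \<le> y" "K = N \<or> y \<le> knot (Suc K)"
    using knot_floor[OF True] knot_mono[of K "nat \<lfloor>(y - x0) / d\<rfloor>"] by (auto simp: K_def min_def)
  have "interp N y = h (knot K - d) + slope K * (y - knot K)" by (rule interp_on_cell[OF K])
  also have "\<dots> \<le> h y"
  proof (cases "knot K = y")
    case True
    then show ?thesis using monoD[OF mono, of "knot K - d" "knot K"] d_pos by simp
  next
    case False
    then have "slope K \<le> (h y - h (knot K)) / (y - knot K)"
      using convex_on_slope_mono[OF convex, of "knot K - d" "knot K" y] K(2) d_pos
      by (simp add: slope_def)
    then have "slope K * (y - knot K) \<le> h y - h (knot K)"
      using K(2) False by (simp add: field_simps)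
    then show ?thesis using monoD[OF mono, of "knot K - d" "knot K"] d_pos by simp
  qed
  finally show ?thesis .
qed

lemma interp_ge:
  assumes "x0 \<le> y" "(y - x0) / d \<le> real N"
  shows "h (y - 2 * d) \<le> interp N y"
proof -
  define K where "K = nat \<lfloor>(y - x0) / d\<rfloor>"
  have KN: "K \<le> N" using assms(2) by (simp add: K_def nat_le_iff floor_le_iff)
  have K: "knot K \<le> y" "y < knot (Suc K)" using knot_floor[OF assms(1)] by (simp_all add: K_def)
  have "h (y - 2 * d) \<le> h (knot K - d)" using K(2) knot_Suc[of K] by (intro monoD[OF mono]) simp
  also have "\<dots> \<le> h (knot K - d) + slope K * (y - knot K)" using slope_nonneg[of K] K(1) by simp
  also have "\<dots> = interp N y" using K interp_on_cell[OF KN K(1)] by simp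
  finally show ?thesis .
qed

lemma nn_integral_interp_mono:
  assumes sets_M: "sets M = sets borel" and sets_N: "sets N = sets borel"
    and g: "g \<in> borel_measurable borel"
    and calls: "\<And>k. (\<integral>\<^sup>+x. ennreal (max (g x - k) 0) \<partial>M) \<le> (\<integral>\<^sup>+x. ennreal (max (g x - k) 0) \<partial>N)"
  shows "(\<integral>\<^sup>+x. ennreal (interp n (g x)) \<partial>M) \<le> (\<integral>\<^sup>+x. ennreal (interp n (g x)) \<partial>N)"
proof -
  define c where "c i = slope i - slope (i - 1)" for i
  have c_nonneg: "0 \<le> c i" for i using slope_mono[of "i - 1" i] by (simp add: c_def)
  have expand: "(\<integral>\<^sup>+x. ennreal (interp n (g x)) \<partial>L) =
      (\<Sum>i\<in>{1..n}. ennreal (c i) * (\<integral>\<^sup>+x. ennreal (max (g x - knot i) 0) \<partial>L))"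
    if sets_L: "sets L = sets borel" for L
  proof -
    note g[measurable] and meas = measurable_cong_sets[OF sets_L refl]
    have "ennreal (interp n y) = (\<Sum>i\<in>{1..n}. ennreal (c i) * ennreal (max (y - knot i) 0))" for y
      unfolding interp_def c_def[symmetric]
      by (subst sum_ennreal[symmetric]) (auto simp: c_nonneg ennreal_mult)
    then show ?thesis
      by (simp add: meas nn_integral_sum nn_integral_cmult)
  qed
  show ?thesis
    unfolding expand[OF sets_M] expand[OF sets_N] by (intro sum_mono mult_left_mono calls) auto
qed

end

lemma nn_integral_mono_convex_of_calls:
  fixes M N :: "real measure" and g h :: "real \<Rightarrow> real"
  assumes sets_M: "sets M = sets borel" and sets_N: "sets N = sets borel"
    and g: "g \<in> borel_measurable borel"
    and calls: "\<And>k. (\<integral>\<^sup>+x. ennreal (max (g x - k) 0) \<partial>M) \<le> (\<integral>\<^sup>+x. ennreal (max (g x - k) 0) \<partial>N)"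
    and convex: "convex_on UNIV h" and mono: "mono h" and vanish: "\<And>x. x \<le> c \<Longrightarrow> h x = 0"
  shows "(\<integral>\<^sup>+x. ennreal (h (g x)) \<partial>M) \<le> (\<integral>\<^sup>+x. ennreal (h (g x)) \<partial>N)"
proof -
  define d where "d j = inverse (real (Suc j))" for j
  define \<phi> where "\<phi> j = convex_grid.interp h c (d j) ((Suc j)\<^sup>2)" for j
  interpret G: convex_grid h c "d j" for j
    using convex mono vanish by unfold_locales (auto simp: d_def)
  have h_cont: "continuous_on UNIV h" using convex_on_continuous[OF open_UNIV convex] .
  have [measurable]: "h \<in> borel_measurable borel" using h_cont by (rule borel_measurable_continuous_onI)
  have [measurable]: "(\<lambda>x. ennreal (\<phi> j (g x))) \<in> borel_measurable borel" for j
    unfolding \<phi>_def G.interp_def using g by measurable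
  have below_liminf: "ennreal (h y) \<le> liminf (\<lambda>j. ennreal (\<phi> j y))" for y
  proof (cases "y \<le> c")
    case True then show ?thesis using vanish by simp
  next
    case False
    obtain J :: nat where J: "y - c \<le> real J" using real_arch_simple by blast
    have "ennreal (h (y - 2 * d j)) \<le> ennreal (\<phi> j y)" if "J \<le> j" for j
    proof -
      have "(y - c) / d j = (y - c) * real (Suc j)" by (simp add: d_def divide_inverse)
      also have "\<dots> \<le> real (Suc j) * real (Suc j)"
        using J that False by (intro mult_right_mono) auto
      also have "\<dots> = real ((Suc j)\<^sup>2)" by (simp only: power2_eq_square of_nat_mult)
      finally have "(y - c) / d j \<le> real ((Suc j)\<^sup>2)" .
      then show ?thesis
        unfolding \<phi>_def using False by (intro ennreal_leI G.interp_ge) auto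
    qed
    then have ev: "eventually (\<lambda>j. ennreal (h (y - 2 * d j)) \<le> ennreal (\<phi> j y)) sequentially"
      unfolding eventually_sequentially by blast
    have "(\<lambda>j. y - 2 * d j) \<longlonglongrightarrow> y - 2 * 0"
      unfolding d_def by (intro tendsto_intros LIMSEQ_inverse_real_of_nat)
    then have "(\<lambda>j. ennreal (h (y - 2 * d j))) \<longlonglongrightarrow> ennreal (h y)"
      by (intro tendsto_ennrealI) (simp add: continuous_on_tendsto_compose[OF h_cont])
    then show ?thesis using Liminf_mono[OF ev] by (simp add: lim_imp_Liminf)
  qed
  have "(\<integral>\<^sup>+x. ennreal (h (g x)) \<partial>M) \<le> (\<integral>\<^sup>+x. liminf (\<lambda>j. ennreal (\<phi> j (g x))) \<partial>M)"
    by (intro nn_integral_mono below_liminf)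
  also have "\<dots> \<le> liminf (\<lambda>j. \<integral>\<^sup>+x. ennreal (\<phi> j (g x)) \<partial>M)"
    by (intro nn_integral_liminf) (simp add: measurable_cong_sets[OF sets_M refl])
  also have "\<dots> \<le> liminf (\<lambda>j. \<integral>\<^sup>+x. ennreal (\<phi> j (g x)) \<partial>N)"
    unfolding \<phi>_def by (intro Liminf_mono always_eventually allI G.nn_integral_interp_mono sets_M sets_N g calls)
  also have "\<dots> \<le> liminf (\<lambda>j. \<integral>\<^sup>+x. ennreal (h (g x)) \<partial>N)"
    by (intro Liminf_mono always_eventually allI nn_integral_mono ennreal_leI) (simp add: \<phi>_def G.interp_le)
  also have "\<dots> = (\<integral>\<^sup>+x. ennreal (h (g x)) \<partial>N)" by (simp add: Liminf_const)
  finally show ?thesis .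
qed

lemma convex_on_ex_supporting_line:
  fixes f :: "real \<Rightarrow> real"
  assumes convex: "convex_on UNIV f"
  obtains s where "\<And>x. f c + s * (x - c) \<le> f x"
proof
  let ?L = "(\<lambda>y. (f c - f y) / (c - y)) ` {..<c}"
  have left_le_right: "(f c - f y) / (c - y) \<le> (f x - f c) / (x - c)" if "y < c" "c < x" for x y
    using convex_on_slope_mono[OF convex that] .
  have bdd: "bdd_above ?L"
    using left_le_right[of _ "c + 1"] by (intro bdd_aboveI2) auto
  fix x
  show "f c + Sup ?L * (x - c) \<le> f x"
  proof (cases x c rule: linorder_cases)
    case less
    have "(f c - f x) / (c - x) \<le> Sup ?L" using less bdd by (intro cSup_upper) auto
    then show ?thesis using less by (simp add: field_simps)
  next
    case greater
    have "Sup ?L \<le> (f x - f c) / (x - c)"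
      using greater by (intro cSup_least) (auto intro: left_le_right)
    then show ?thesis using greater by (simp add: field_simps)
  qed simp
qed

lemma convex_on_nonneg_mono_on_nonneg:
  fixes h :: "real \<Rightarrow> real"
  assumes convex: "convex_on UNIV h" and nonneg: "\<And>x. 0 \<le> h x" and zero: "h 0 = 0"
    and "0 \<le> a" "a \<le> b"
  shows "h a \<le> h b"
proof -
  have "h a \<le> max (h 0) (h b)"
    using assms(4,5) by (intro convex_on_le_max convex_on_subset[OF convex]) auto
  then show ?thesis using zero nonneg[of b] by simp
qed

lemma convex_mono_comp_pos_part:
  fixes h :: "real \<Rightarrow> real"
  assumes convex: "convex_on UNIV h" and nonneg: "\<And>x. 0 \<le> h x" and zero: "h 0 = 0"
  shows "convex_on UNIV (\<lambda>y. h (max y 0))" "mono (\<lambda>y. h (max y 0))"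
proof -
  note mono_h = convex_on_nonneg_mono_on_nonneg[OF convex nonneg zero]
  show "mono (\<lambda>y. h (max y 0))" by (rule monoI) (intro mono_h, auto)
  show "convex_on UNIV (\<lambda>y. h (max y 0))"
  proof (rule convex_onI)
    fix t x y :: real assume t: "0 < t" "t < 1"
    have "(1 - t) * x \<le> (1 - t) * max x 0" "t * y \<le> t * max y 0"
      using t by (auto intro: mult_left_mono)
    moreover have "0 \<le> (1 - t) * max x 0 + t * max y 0" using t by simp
    ultimately have "h (max ((1 - t) *\<^sub>R x + t *\<^sub>R y) 0) \<le> h ((1 - t) *\<^sub>R max x 0 + t *\<^sub>R max y 0)"
      by (intro mono_h) auto
    also have "\<dots> \<le> (1 - t) * h (max x 0) + t * h (max y 0)"
      using t by (intro convex_onD[OF convex]) auto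
    finally show "h (max ((1 - t) *\<^sub>R x + t *\<^sub>R y) 0) \<le> (1 - t) * h (max x 0) + t * h (max y 0)" .
  qed auto
qed

lemma convex_on_reflect: "convex_on UNIV h \<Longrightarrow> convex_on UNIV (\<lambda>y::real. h (- y))"
proof (rule convex_onI)
  fix t x y :: real assume convex: "convex_on UNIV h" and t: "0 < t" "t < 1"
  have "h (- ((1 - t) *\<^sub>R x + t *\<^sub>R y)) = h ((1 - t) *\<^sub>R (- x) + t *\<^sub>R (- y))"
    by (simp add: algebra_simps)
  also have "\<dots> \<le> (1 - t) * h (- x) + t * h (- y)" using t by (intro convex_onD[OF convex]) auto
  finally show "h (- ((1 - t) *\<^sub>R x + t *\<^sub>R y)) \<le> (1 - t) * h (- x) + t * h (- y)" .
qed auto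

lemma nn_integral_mono_convex_of_putf_callf:
  assumes M: "fin_meas1 M" and N: "fin_meas1 N"
    and put: "\<And>k. putf M k \<le> putf N k" and call: "\<And>k. callf M k \<le> callf N k"
    and convex: "convex_on UNIV h" and nonneg: "\<And>x. 0 \<le> h x" and zero: "h 0 = 0"
  shows "(\<integral>\<^sup>+x. ennreal (h x) \<partial>M) \<le> (\<integral>\<^sup>+x. ennreal (h x) \<partial>N)"
proof -
  have [measurable]: "h \<in> borel_measurable borel"
    using convex_on_continuous[OF open_UNIV convex] by (rule borel_measurable_continuous_onI)
  note right = convex_mono_comp_pos_part[OF convex nonneg zero]
  note left = convex_mono_comp_pos_part[OF convex_on_reflect[OF convex] nonneg, simplified zero, simplified]
  have split: "(\<integral>\<^sup>+x. ennreal (h x) \<partial>L)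
      = (\<integral>\<^sup>+x. ennreal (h (max (id x) 0)) \<partial>L) + (\<integral>\<^sup>+x. ennreal (h (- max (- x) 0)) \<partial>L)"
    if L: "fin_meas1 L" for L
  proof -
    have "ennreal (h x) = ennreal (h (max (id x) 0)) + ennreal (h (- max (- x) 0))" for x
      using nonneg by (cases "0 \<le> x") (simp_all add: zero flip: ennreal_plus)
    then have "(\<integral>\<^sup>+x. ennreal (h x) \<partial>L)
        = (\<integral>\<^sup>+x. ennreal (h (max (id x) 0)) + ennreal (h (- max (- x) 0)) \<partial>L)"
      by (intro nn_integral_cong) blast
    also have "\<dots> = (\<integral>\<^sup>+x. ennreal (h (max (id x) 0)) \<partial>L) + (\<integral>\<^sup>+x. ennreal (h (- max (- x) 0)) \<partial>L)"
      by (intro nn_integral_add fin_meas1_measurable[OF L]; measurable)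
    finally show ?thesis .
  qed
  have call_le: "(\<integral>\<^sup>+x. ennreal (max (id x - k) 0) \<partial>M) \<le> (\<integral>\<^sup>+x. ennreal (max (id x - k) 0) \<partial>N)" for k
    using call[of k] unfolding id_def nn_integral_call_payoff[OF M] nn_integral_call_payoff[OF N]
    by (simp add: ennreal_leI)
  have "(\<integral>\<^sup>+x. ennreal (max (- x - k) 0) \<partial>L) = ennreal (putf L (- k))" if "fin_meas1 L" for L k
  proof -
    have "(\<integral>\<^sup>+x. ennreal (max (- x - k) 0) \<partial>L) = (\<integral>\<^sup>+x. ennreal (max (- k - x) 0) \<partial>L)"
      by (rule nn_integral_cong) (smt (verit))
    then show ?thesis using nn_integral_put_payoff[OF that, of "- k"] by simp
  qed
  then have put_le: "(\<integral>\<^sup>+x. ennreal (max (- x - k) 0) \<partial>M) \<le> (\<integral>\<^sup>+x. ennreal (max (- x - k) 0) \<partial>N)" for k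
    using put[of "- k"] M N by (simp add: ennreal_leI)
  show ?thesis
    unfolding split[OF M] split[OF N]
  proof (intro add_mono)
    show "(\<integral>\<^sup>+x. ennreal (h (max (id x) 0)) \<partial>M) \<le> (\<integral>\<^sup>+x. ennreal (h (max (id x) 0)) \<partial>N)"
      using right M N call_le
      by (intro nn_integral_mono_convex_of_calls[where h="\<lambda>y. h (max y 0)" and c=0])
        (auto simp: fin_meas1_sets zero)
    show "(\<integral>\<^sup>+x. ennreal (h (- max (- x) 0)) \<partial>M) \<le> (\<integral>\<^sup>+x. ennreal (h (- max (- x) 0)) \<partial>N)"
      using left M N put_le
      by (intro nn_integral_mono_convex_of_calls[where h="\<lambda>y. h (- max y 0)" and g=uminus and c=0])
        (auto simp: fin_meas1_sets zero)
  qed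
qed

lemma cx_le_if_putf_le:
  assumes M: "fin_meas1 M" and N: "fin_meas1 N"
    and mass: "measure M UNIV = measure N UNIV" and mean: "bary M = bary N"
    and put: "\<And>k. putf M k \<le> putf N k"
  shows "cx_le M N"
  unfolding cx_le_def
proof (intro allI impI)
  fix f :: "real \<Rightarrow> real" assume convex_f: "convex_on UNIV f"
  obtain s where s: "\<And>x. f 0 + s * (x - 0) \<le> f x"
    using convex_on_ex_supporting_line[OF convex_f, of 0] by blast
  define h where "h x = f x - (s * x + f 0)" for x
  have h_nonneg: "0 \<le> h x" for x using s[of x] by (simp add: h_def)
  have "h = (\<lambda>x. f x + (- s * x + - f 0))" by (simp add: h_def fun_eq_iff)
  then have h_convex: "convex_on UNIV h"
    by (simp only: convex_on_add[OF convex_f convex_on_affine])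
  have h_meas: "h \<in> borel_measurable borel"
    using convex_on_continuous[OF open_UNIV h_convex] by (rule borel_measurable_continuous_onI)
  have "callf M k \<le> callf N k" for k
    using put[of k] put_call_parity[OF M, of k] put_call_parity[OF N, of k] mass mean by simp
  then have "(\<integral>\<^sup>+x. ennreal (h x) \<partial>M) \<le> (\<integral>\<^sup>+x. ennreal (h x) \<partial>N)"
    by (rule nn_integral_mono_convex_of_putf_callf[OF M N put _ h_convex h_nonneg]) (simp add: h_def)
  then have h_int_le: "enn2ereal (\<integral>\<^sup>+x. ennreal (h x) \<partial>M) \<le> enn2ereal (\<integral>\<^sup>+x. ennreal (h x) \<partial>N)"
    by (simp add: less_eq_ennreal.rep_eq)
  have f_eq: "(\<lambda>x. h x + (s * x + f 0)) = f" by (simp add: h_def)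
  show "ext_int M f \<le> ext_int N f"
    unfolding ext_int_nonneg_plus_affine[OF M h_nonneg h_meas, of s "f 0", unfolded f_eq]
      ext_int_nonneg_plus_affine[OF N h_nonneg h_meas, of s "f 0", unfolded f_eq] mass mean
    by (rule add_right_mono[OF h_int_le])
qed

section \<open>Characterisation of the counter-shadow\<close>

lemma convex_env_ge:
  assumes "convex_on UNIV \<psi>" "\<And>y. \<psi> y \<le> u y"
  shows "\<psi> x \<le> convex_env u x"
  unfolding convex_env_def using assms by (intro cSup_upper bdd_aboveI[of _ "u x"]) auto

lemma convex_env_eqI:
  assumes "convex_on UNIV g" "\<And>y. g y \<le> u y"
    and "\<And>\<psi> x. convex_on UNIV \<psi> \<Longrightarrow> (\<And>y. \<psi> y \<le> u y) \<Longrightarrow> \<psi> x \<le> g x"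
  shows "convex_env u = g"
proof
  fix x
  show "convex_env u x = g x"
    unfolding convex_env_def using assms by (intro cSup_eq_maximum) blast+
qed

lemma putf_le_Ptilde:
  assumes "fin_meas1 L" and "measure L UNIV = measure \<mu> UNIV" "bary L = bary \<mu>"
    and "putf L k \<le> putf \<nu> k" "callf L k \<le> callf \<nu> k"
  shows "putf L k \<le> Ptilde \<nu> \<mu> k"
  using assms put_call_parity[OF assms(1), of k] by (simp add: Ptilde_def)

lemma counter_shadow_eqI:
  assumes \<mu>: "fin_meas1 \<mu>" and \<nu>: "fin_meas1 \<nu>" and E: "E_le \<mu> \<nu>"
    and \<eta>: "fin_meas1 \<eta>" and le: "meas_le \<eta> \<nu>"
    and mass: "measure \<eta> UNIV = measure \<mu> UNIV" and mean: "bary \<eta> = bary \<mu>"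
    and env: "putf \<eta> = convex_env (Ptilde \<nu> \<mu>)"
  shows "counter_shadow \<nu> \<mu> = \<eta>"
proof -
  have below_\<eta>: "cx_le L \<eta>" if L: "fin_meas1 L" "measure L UNIV = measure \<mu> UNIV" "bary L = bary \<mu>"
    and put_call: "\<And>k. putf L k \<le> putf \<nu> k" "\<And>k. callf L k \<le> callf \<nu> k" for L
  proof (rule cx_le_if_putf_le[OF L(1) \<eta>])
    show "measure L UNIV = measure \<eta> UNIV" "bary L = bary \<eta>" using L mass mean by simp_all
    show "putf L k \<le> putf \<eta> k" for k
      unfolding env using L put_call putf_le_Ptilde
      by (intro convex_env_ge convex_on_putf) blast+
  qed
  have candidate_below: "fin_meas1 \<eta>' \<and> cx_le \<eta>' \<eta>"
    if sets_\<eta>': "sets \<eta>' = sets borel" and cx: "cx_le \<mu> \<eta>'" and le': "meas_le \<eta>' \<nu>" for \<eta>'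
  proof
    show \<eta>': "fin_meas1 \<eta>'" by (rule meas_le_fin_meas1[OF \<nu> sets_\<eta>' le'])
    show "cx_le \<eta>' \<eta>"
      using cx_le_measure_bary_eq[OF \<mu> \<eta>' cx] meas_le_putf_callf[OF \<nu> sets_\<eta>' le']
      by (intro below_\<eta> \<eta>') simp_all
  qed
  let ?P = "\<lambda>\<eta>. sets \<eta> = sets borel \<and> cx_le \<mu> \<eta> \<and> meas_le \<eta> \<nu> \<and>
      (\<forall>\<eta>'. sets \<eta>' = sets borel \<longrightarrow> cx_le \<mu> \<eta>' \<longrightarrow> meas_le \<eta>' \<nu> \<longrightarrow> cx_le \<eta>' \<eta>)"
  have "?P \<eta>"
    using fin_meas1_sets[OF \<eta>] le candidate_below E_le_putf[OF \<mu> \<nu> E] E_le_callf[OF \<mu> \<nu> E]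
    by (auto intro: below_\<eta> \<mu>)
  moreover have "\<eta>2 = \<eta>" if P2: "?P \<eta>2" for \<eta>2
  proof -
    have \<eta>2: "fin_meas1 \<eta>2" and "cx_le \<eta>2 \<eta>" using candidate_below P2 by blast+
    moreover have "cx_le \<eta> \<eta>2" using P2 \<open>?P \<eta>\<close> by blast
    ultimately have "putf \<eta>2 = putf \<eta>" "measure \<eta>2 UNIV = measure \<eta> UNIV"
      using cx_le_putf[OF \<eta>2 \<eta>] cx_le_putf[OF \<eta> \<eta>2] cx_le_measure_bary_eq[OF \<eta>2 \<eta>]
      by (auto intro: antisym)
    then show ?thesis using fin_meas1_eqI_putf[OF \<eta>2 \<eta>] by simp
  qed
  ultimately show ?thesis unfolding counter_shadow_def by (rule the_equality)
qed

section \<open>Quantile representation\<close>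

locale quantile_representation =
  fixes \<nu> :: "real measure"
  assumes \<nu>: "fin_meas1 \<nu>" and mass_pos: "0 < measure \<nu> UNIV"
begin

definition "mass = measure \<nu> UNIV"
definition "normalized = density \<nu> (\<lambda>_. ennreal (1 / mass))"
definition "\<Omega> = restrict_space lborel {0<..<1::real}"
definition "quantile r = Inf {x. r \<le> cdf normalized x}"
definition "quantile_part S = distr (density \<Omega> (\<lambda>r. ennreal (mass * indicator S r))) borel quantile"

lemma mass_gt_0: "0 < mass"
  using mass_pos by (simp add: mass_def)

lemma space_\<Omega>: "space \<Omega> = {0<..<1}"
  by (simp add: \<Omega>_def)

lemma sets_\<Omega>: "sets \<Omega> = sets (restrict_space borel {0<..<1::real})"
  by (simp add: \<Omega>_def sets_restrict_space)

lemma finite_measure_\<Omega>: "finite_measure \<Omega>"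
  unfolding \<Omega>_def by (rule finite_measureI) (simp add: space_restrict_space emeasure_restrict_space)

lemma cdf_distribution_normalized: "cdf_distribution normalized"
proof -
  have "emeasure normalized (space normalized) = ennreal (1 / mass) * emeasure \<nu> (space \<nu>)"
    by (simp add: normalized_def emeasure_density_const)
  also have "emeasure \<nu> (space \<nu>) = ennreal mass"
    using \<nu> by (simp add: mass_def finite_measure.emeasure_eq_measure fin_meas1_finite_measure fin_meas1_space)
  also have "ennreal (1 / mass) * ennreal mass = 1"
    using mass_gt_0 by (simp flip: ennreal_mult)
  finally have "prob_space normalized" by (rule prob_spaceI)
  then show ?thesis
    using fin_meas1_sets[OF \<nu>]
    by (simp add: normalized_def cdf_distribution_def real_distribution_def real_distribution_axioms_def)
qed

lemma quantile_mono: "0 < r \<Longrightarrow> r \<le> r' \<Longrightarrow> r' < 1 \<Longrightarrow> quantile r \<le> quantile r'"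
proof -
  interpret cdf_distribution normalized by (rule cdf_distribution_normalized)
  show "0 < r \<Longrightarrow> r \<le> r' \<Longrightarrow> r' < 1 \<Longrightarrow> quantile r \<le> quantile r'"
    using mono_I unfolding quantile_def mono_on_def by auto
qed

lemma quantile_measurable[measurable]: "quantile \<in> borel_measurable \<Omega>"
proof -
  interpret cdf_distribution normalized by (rule cdf_distribution_normalized)
  show ?thesis using measurable_CI unfolding quantile_def measurable_cong_sets[OF sets_\<Omega> refl] .
qed

lemma distr_quantile: "distr \<Omega> borel quantile = normalized"
proof -
  interpret cdf_distribution normalized by (rule cdf_distribution_normalized)
  show ?thesis using distr_I_eq_M unfolding quantile_def \<Omega>_def .
qed

lemma indicator_measurable_\<Omega>[measurable]:
  "S \<in> sets borel \<Longrightarrow> (indicator S :: real \<Rightarrow> real) \<in> borel_measurable \<Omega>"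
  unfolding measurable_cong_sets[OF sets_\<Omega> refl]
  by (intro measurable_restrict_space1 borel_measurable_indicator) simp

lemma quantile_measurable_density: "quantile \<in> density \<Omega> g \<rightarrow>\<^sub>M borel"
  by (simp add: measurable_cong_sets[OF sets_density refl])

lemma quantile_part_UNIV: "quantile_part UNIV = \<nu>"
proof -
  have "\<nu> = density \<nu> (\<lambda>x. ennreal (1 / mass) * ennreal mass)"
    using mass_gt_0 by (simp flip: ennreal_mult add: density_1)
  also have "\<dots> = density normalized (\<lambda>_. ennreal mass)"
    unfolding normalized_def by (subst density_density_eq) (auto simp: fin_meas1_measurable[OF \<nu>])
  also have "\<dots> = distr (density \<Omega> (\<lambda>_. ennreal mass)) borel quantile"
    unfolding distr_quantile[symmetric]
    by (subst density_distr) auto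
  finally show ?thesis by (simp add: quantile_part_def)
qed

lemma sets_quantile_part: "sets (quantile_part S) = sets borel"
  by (simp add: quantile_part_def)

lemma integral_quantile_part:
  assumes f: "f \<in> borel_measurable borel" and S: "S \<in> sets borel"
  shows "integral\<^sup>L (quantile_part S) f = (\<integral>r. mass * indicator S r * f (quantile r) \<partial>\<Omega>)"
proof -
  have "integral\<^sup>L (quantile_part S) f
      = (\<integral>r. f (quantile r) \<partial>density \<Omega> (\<lambda>r. ennreal (mass * indicator S r)))"
    unfolding quantile_part_def by (rule integral_distr[OF quantile_measurable_density f])
  also have "\<dots> = (\<integral>r. (mass * indicator S r) *\<^sub>R f (quantile r) \<partial>\<Omega>)"
    using f S mass_gt_0 by (intro integral_density) auto
  finally show ?thesis by simp
qed

lemma quantile_part_meas_le: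
  assumes S: "S \<in> sets borel"
  shows "meas_le (quantile_part S) \<nu>"
  unfolding meas_le_def
proof
  fix A :: "real set" assume A: "A \<in> sets borel"
  have dens: "(\<lambda>r. ennreal (mass * indicator S r)) \<in> borel_measurable \<Omega>" using S by measurable
  have pre: "quantile -` A \<inter> space \<Omega> \<in> sets \<Omega>" using quantile_measurable A by (rule measurable_sets)
  have "emeasure (quantile_part S) A = (\<integral>\<^sup>+r\<in>quantile -` A \<inter> space \<Omega>. ennreal (mass * indicator S r) \<partial>\<Omega>)"
    unfolding quantile_part_def using A quantile_measurable_density pre
    by (simp add: emeasure_distr emeasure_density[OF dens] space_density)
  also have "\<dots> \<le> (\<integral>\<^sup>+r\<in>quantile -` A \<inter> space \<Omega>. ennreal mass \<partial>\<Omega>)"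
    using mass_gt_0 by (intro nn_integral_mono) (auto simp: indicator_def)
  also have "\<dots> = emeasure (quantile_part UNIV) A"
    unfolding quantile_part_def using A quantile_measurable_density pre
    by (simp add: emeasure_distr emeasure_density space_density)
  finally show "emeasure (quantile_part S) A \<le> emeasure \<nu> A" by (simp only: quantile_part_UNIV)
qed

lemma fin_meas1_quantile_part: "S \<in> sets borel \<Longrightarrow> fin_meas1 (quantile_part S)"
  using meas_le_fin_meas1[OF \<nu> sets_quantile_part quantile_part_meas_le] .

lemma integrable_quantile: "integrable \<Omega> quantile"
proof -
  have "integrable (quantile_part UNIV) (\<lambda>x. x)"
    using fin_meas1_integrable_ident[OF \<nu>] by (simp add: quantile_part_UNIV)
  then have "integrable (density \<Omega> (\<lambda>r. ennreal (mass * indicator UNIV r))) quantile"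
    unfolding quantile_part_def integrable_distr_eq[OF quantile_measurable_density measurable_ident_sets[OF refl]] .
  then have "integrable \<Omega> (\<lambda>r. (mass * indicator UNIV r) *\<^sub>R quantile r)"
  proof (subst (asm) integrable_density)
    show "(\<lambda>r. mass * indicator UNIV r) \<in> borel_measurable \<Omega>" by simp
    show "AE r in \<Omega>. 0 \<le> mass * indicator UNIV r" using mass_gt_0 by simp
  qed simp
  then have "integrable \<Omega> (\<lambda>r. (1 / mass) * (mass * quantile r))"
    by (intro integrable_mult_right) simp
  then show ?thesis using mass_gt_0 by simp
qed

lemma integrable_indicator_\<Omega>:
  assumes [measurable]: "S \<in> sets borel" shows "integrable \<Omega> (\<lambda>r. c * indicator S r :: real)"
  using finite_measure.integrable_const[OF finite_measure_\<Omega>, of c]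
proof (rule Bochner_Integration.integrable_bound)
  show "(\<lambda>r. c * indicator S r) \<in> borel_measurable \<Omega>" by measurable
  show "AE r in \<Omega>. norm (c * indicator S r) \<le> norm c"
    by (intro AE_I2) (simp add: indicator_def)
qed

lemma integrable_indicator_quantile:
  assumes [measurable]: "S \<in> sets borel" shows "integrable \<Omega> (\<lambda>r. c * indicator S r * quantile r)"
  using integrable_mult_right[OF integrable_quantile, of c]
proof (rule Bochner_Integration.integrable_bound)
  show "(\<lambda>r. c * indicator S r * quantile r) \<in> borel_measurable \<Omega>" by measurable
  show "AE r in \<Omega>. norm (c * indicator S r * quantile r) \<le> norm (c * quantile r)"
    by (intro AE_I2) (simp add: indicator_def abs_mult)
qed

lemma putf_quantile_part:
  "S \<in> sets borel \<Longrightarrow> putf (quantile_part S) k = (\<integral>r. mass * indicator S r * max (k - quantile r) 0 \<partial>\<Omega>)"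
  unfolding putf_def by (rule integral_quantile_part) auto

lemma callf_quantile_part:
  "S \<in> sets borel \<Longrightarrow> callf (quantile_part S) k = (\<integral>r. mass * indicator S r * max (quantile r - k) 0 \<partial>\<Omega>)"
  unfolding callf_def by (rule integral_quantile_part) auto

lemma bary_quantile_part:
  "S \<in> sets borel \<Longrightarrow> bary (quantile_part S) = (\<integral>r. mass * indicator S r * quantile r \<partial>\<Omega>)"
  unfolding bary_def by (rule integral_quantile_part) auto

lemma measure_quantile_part:
  assumes S: "S \<in> sets borel"
  shows "measure (quantile_part S) UNIV = (\<integral>r. mass * indicator S r \<partial>\<Omega>)"
proof -
  have "measure (quantile_part S) UNIV = (\<integral>x. 1 \<partial>quantile_part S)"
    using fin_meas1_space[OF fin_meas1_quantile_part[OF S]] by simp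
  also have "\<dots> = (\<integral>r. mass * indicator S r * 1 \<partial>\<Omega>)" by (rule integral_quantile_part[OF _ S]) simp
  finally show ?thesis by simp
qed

lemma integral_cong_\<Omega>:
  "(\<And>r. 0 < r \<Longrightarrow> r < 1 \<Longrightarrow> f r = g r) \<Longrightarrow> (\<integral>r. f r \<partial>\<Omega>) = (\<integral>r. g r \<partial>\<Omega>)"
  by (rule Bochner_Integration.integral_cong) (auto simp: space_\<Omega>)

lemma measure_\<Omega>_lessThan: "0 \<le> c \<Longrightarrow> c \<le> 1 \<Longrightarrow> measure \<Omega> ({..<c} \<inter> space \<Omega>) = c"
proof -
  assume c: "0 \<le> c" "c \<le> 1"
  have "{..<c} \<inter> space \<Omega> = {0<..<c}" using c by (auto simp: space_\<Omega>)
  moreover have "measure \<Omega> {0<..<c} = measure lborel {0<..<c}"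
    unfolding \<Omega>_def using c by (intro measure_restrict_space) auto
  ultimately show ?thesis using c by simp
qed

lemma putf_eq_integral_\<Omega>: "putf \<nu> k = (\<integral>r. mass * indicator UNIV r * max (k - quantile r) 0 \<partial>\<Omega>)"
  using putf_quantile_part[of UNIV k] by (simp add: quantile_part_UNIV)

lemma callf_eq_integral_\<Omega>: "callf \<nu> k = (\<integral>r. mass * indicator UNIV r * max (quantile r - k) 0 \<partial>\<Omega>)"
  using callf_quantile_part[of UNIV k] by (simp add: quantile_part_UNIV)

definition "lower_integral c = (\<integral>r. indicator {..<c} r * quantile r \<partial>\<Omega>)"

lemma continuous_lower_integral: "continuous_on UNIV lower_integral"
proof -
  have "isCont lower_integral c" for c
  proof (rule continuous_at_sequentiallyI)
    fix u :: "nat \<Rightarrow> real" assume u: "u \<longlonglongrightarrow> c"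
    have AE_ne: "AE r in \<Omega>. r \<noteq> c"
      unfolding \<Omega>_def
      by (subst AE_restrict_space_iff) (auto intro: eventually_mono[OF AE_lborel_singleton[of c]])
    have pointwise: "(\<lambda>i. indicator {..<u i} r * quantile r) \<longlonglongrightarrow> indicator {..<c} r * quantile r"
      if r_ne: "r \<noteq> c" for r
    proof -
      consider "r < c" | "c < r" using r_ne by (auto simp: neq_iff)
      then have "eventually (\<lambda>i. indicator {..<u i} r = (indicator {..<c} r :: real)) sequentially"
      proof cases
        case 1
        show ?thesis using order_tendstoD(1)[OF u 1] by eventually_elim (use 1 in \<open>simp add: indicator_def\<close>)
      next
        case 2
        show ?thesis using order_tendstoD(2)[OF u 2] by eventually_elim (use 2 in \<open>simp add: indicator_def\<close>)
      qed
      then show ?thesis by (intro tendsto_eventually) (auto elim!: eventually_mono)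
    qed
    show "(\<lambda>n. lower_integral (u n)) \<longlonglongrightarrow> lower_integral c"
      unfolding lower_integral_def
    proof (rule integral_dominated_convergence[where w="\<lambda>r. norm (quantile r)"])
      show "integrable \<Omega> (\<lambda>r. norm (quantile r))" using integrable_quantile by simp
      show "(\<lambda>r. indicator {..<c} r * quantile r) \<in> borel_measurable \<Omega>"
        "(\<lambda>r. indicator {..<u i} r * quantile r) \<in> borel_measurable \<Omega>" for i
        by measurable
      show "AE r in \<Omega>. norm (indicator {..<u i} r * quantile r) \<le> norm (quantile r)" for i
        by (intro AE_I2) (simp add: indicator_def)
      show "AE r in \<Omega>. (\<lambda>i. indicator {..<u i} r * quantile r) \<longlonglongrightarrow> indicator {..<c} r * quantile r"
        using AE_ne by (rule AE_mp) (auto intro: pointwise)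
    qed
  qed
  then show ?thesis by (simp add: continuous_at_imp_continuous_on)
qed

lemma lower_integral_0: "lower_integral 0 = 0"
proof -
  have "lower_integral 0 = (\<integral>r. 0 \<partial>\<Omega>)"
    unfolding lower_integral_def by (rule integral_cong_\<Omega>) simp
  then show ?thesis by simp
qed

end

section \<open>Construction of the counter-shadow\<close>

locale counter_shadow_construction = quantile_representation +
  fixes \<mu> :: "real measure"
  assumes \<mu>: "fin_meas1 \<mu>" and E: "E_le \<mu> \<nu>"
    and mass_\<mu>_pos: "0 < measure \<mu> UNIV" and mass_\<mu>_less: "measure \<mu> UNIV < measure \<nu> UNIV"
begin

definition "m = measure \<mu> UNIV"
definition "b = bary \<mu>"
definition "\<alpha> = m / mass"
definition "\<delta> = 1 - \<alpha>"
(* The window [p, p + \<delta>) of dropped levels removes exactly the excess mass of \<nu> over \<mu>. *)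
definition "levels p = {0<..<p} \<union> {p + \<delta>..<1::real}"
definition "bary_levels p = bary (quantile_part (levels p))"

lemma \<alpha>_\<delta>: "0 < \<alpha>" "\<alpha> < 1" "0 < \<delta>" "\<alpha> + \<delta> = 1"
  using mass_\<mu>_pos mass_\<mu>_less mass_gt_0 by (auto simp: \<alpha>_def \<delta>_def m_def mass_def field_simps)

lemma levels_borel: "levels p \<in> sets borel"
  by (simp add: levels_def)

lemma mem_levels: "0 < r \<Longrightarrow> r < 1 \<Longrightarrow> r \<in> levels p \<longleftrightarrow> r < p \<or> p + \<delta> \<le> r"
  by (auto simp: levels_def)

lemma fin_meas1_levels: "fin_meas1 (quantile_part (levels p))"
  by (rule fin_meas1_quantile_part[OF levels_borel])

lemma measure_levels:
  assumes p: "0 \<le> p" "p \<le> \<alpha>"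
  shows "measure (quantile_part (levels p)) UNIV = m"
proof -
  have "measure (quantile_part (levels p)) UNIV
      = (\<integral>r. mass * indicator {..<p} r + mass * indicator {..<1} r - mass * indicator {..<p + \<delta>} r \<partial>\<Omega>)"
    unfolding measure_quantile_part[OF levels_borel]
    using p \<alpha>_\<delta> by (intro integral_cong_\<Omega>) (auto simp: mem_levels indicator_def)
  also have "\<dots> = mass * p + mass * 1 - mass * (p + \<delta>)"
    using p \<alpha>_\<delta> integrable_indicator_\<Omega>
    by (simp add: measure_\<Omega>_lessThan)
  also have "\<dots> = m" using mass_gt_0 by (simp add: \<delta>_def \<alpha>_def algebra_simps)
  finally show ?thesis .
qed

lemma bary_levels_eq:
  assumes "0 \<le> p"
  shows "bary_levels p = mass * lower_integral p + mass * lower_integral 1 - mass * lower_integral (p + \<delta>)"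
proof -
  have "bary_levels p = (\<integral>r. mass * indicator {..<p} r * quantile r + mass * indicator {..<1} r * quantile r
      - mass * indicator {..<p + \<delta>} r * quantile r \<partial>\<Omega>)"
    unfolding bary_levels_def bary_quantile_part[OF levels_borel]
    using assms \<alpha>_\<delta> by (intro integral_cong_\<Omega>) (auto simp: mem_levels indicator_def)
  also have "\<dots> = mass * lower_integral p + mass * lower_integral 1 - mass * lower_integral (p + \<delta>)"
    using integrable_indicator_quantile[of "{..<_}" mass] unfolding lower_integral_def by (simp add: mult.assoc)
  finally show ?thesis .
qed

lemma continuous_bary_levels: "continuous_on {0..\<alpha>} bary_levels"
proof -
  have "continuous_on {0..\<alpha>} (\<lambda>p. mass * lower_integral p + mass * lower_integral 1 - mass * lower_integral (p + \<delta>))"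
    by (intro continuous_intros continuous_on_compose2[OF continuous_lower_integral]) auto
  then show ?thesis by (rule continuous_on_cong[THEN iffD1, rotated 2]) (auto simp: bary_levels_eq)
qed

lemma putf_levels_left:
  assumes "0 < p" "p \<le> \<alpha>" "k \<le> quantile p"
  shows "putf (quantile_part (levels p)) k = putf \<nu> k"
  unfolding putf_quantile_part[OF levels_borel] putf_eq_integral_\<Omega>
proof (rule integral_cong_\<Omega>)
  fix r :: real assume r: "0 < r" "r < 1"
  show "mass * indicator (levels p) r * max (k - quantile r) 0 = mass * indicator UNIV r * max (k - quantile r) 0"
  proof (cases "r \<in> levels p")
    case False
    then have "quantile p \<le> quantile r" using assms r by (intro quantile_mono) (auto simp: mem_levels)
    then show ?thesis using assms False by simp
  qed simp
qed

lemma callf_levels_right: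
  assumes "0 \<le> p" "p < \<alpha>" "quantile (p + \<delta>) \<le> k"
  shows "callf (quantile_part (levels p)) k = callf \<nu> k"
  unfolding callf_quantile_part[OF levels_borel] callf_eq_integral_\<Omega>
proof (rule integral_cong_\<Omega>)
  fix r :: real assume r: "0 < r" "r < 1"
  show "mass * indicator (levels p) r * max (quantile r - k) 0 = mass * indicator UNIV r * max (quantile r - k) 0"
  proof (cases "r \<in> levels p")
    case False
    then have "quantile r \<le> quantile (p + \<delta>)"
      using assms r \<alpha>_\<delta> by (intro quantile_mono) (auto simp: mem_levels)
    then show ?thesis using assms False by simp
  qed simp
qed

lemma putf_levels_middle:
  assumes p: "0 \<le> p" "p \<le> \<alpha>"
    and k: "p = 0 \<or> quantile p \<le> k" "p = \<alpha> \<or> k \<le> quantile (p + \<delta>)"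
  shows "putf (quantile_part (levels p)) k = mass * (p * k - lower_integral p)"
proof -
  have "putf (quantile_part (levels p)) k
      = (\<integral>r. k * (mass * indicator {..<p} r) - mass * (indicator {..<p} r * quantile r) \<partial>\<Omega>)"
    unfolding putf_quantile_part[OF levels_borel]
  proof (rule integral_cong_\<Omega>)
    fix r :: real assume r: "0 < r" "r < 1"
    consider "r < p" | "p \<le> r" "r < p + \<delta>" | "p + \<delta> \<le> r" by linarith
    then show "mass * indicator (levels p) r * max (k - quantile r) 0
        = k * (mass * indicator {..<p} r) - mass * (indicator {..<p} r * quantile r)"
    proof cases
      case 1
      then have "quantile r \<le> k"
        using k(1) quantile_mono[of r p] r p \<alpha>_\<delta> by fastforce
      then show ?thesis using 1 r by (simp add: mem_levels algebra_simps)
    next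
      case 3
      then have "p \<noteq> \<alpha>" using r \<alpha>_\<delta> by auto
      then have "k \<le> quantile r"
        using k(2) quantile_mono[of "p + \<delta>" r] 3 r p \<alpha>_\<delta> by fastforce
      then show ?thesis using 3 r p \<alpha>_\<delta> by (simp add: mem_levels)
    qed (use r in \<open>simp add: mem_levels\<close>)
  qed
  also have "\<dots> = mass * (p * k - lower_integral p)"
    using p \<alpha>_\<delta> integrable_indicator_\<Omega>[of "{..<p}" mass] integrable_indicator_quantile[of "{..<p}" 1]
    by (simp add: lower_integral_def measure_\<Omega>_lessThan algebra_simps)
  finally show ?thesis .
qed

lemma putf_levels_parity:
  assumes "0 \<le> p" "p \<le> \<alpha>"
  shows "putf (quantile_part (levels p)) k = callf (quantile_part (levels p)) k + m * k - bary_levels p"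
  using put_call_parity[OF fin_meas1_levels] measure_levels[OF assms] by (simp add: bary_levels_def)

lemma bary_levels_0: "b \<le> bary_levels 0"
proof -
  define k where "k = quantile \<delta>"
  have "callf \<nu> k = callf (quantile_part (levels 0)) k"
    using \<alpha>_\<delta> by (intro callf_levels_right[symmetric]) (auto simp: k_def)
  also have "\<dots> = bary_levels 0 - m * k"
    using putf_levels_parity[of 0 k] putf_levels_middle[of 0 k] \<alpha>_\<delta> by (simp add: lower_integral_0 k_def)
  finally show ?thesis
    using callf_ge_affine[OF \<mu>, of k] E_le_callf[OF \<mu> \<nu> E, of k] by (simp add: b_def m_def)
qed

lemma bary_levels_\<alpha>: "bary_levels \<alpha> \<le> b"
proof -
  define k where "k = quantile \<alpha>"
  have "putf \<nu> k = putf (quantile_part (levels \<alpha>)) k"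
    using \<alpha>_\<delta> by (intro putf_levels_left[symmetric]) (auto simp: k_def)
  also have "\<dots> = mass * (\<alpha> * k - lower_integral \<alpha>)"
    using \<alpha>_\<delta> by (intro putf_levels_middle) (auto simp: k_def)
  also have "\<dots> = m * k - bary_levels \<alpha>"
    using \<alpha>_\<delta> mass_gt_0 by (simp add: bary_levels_eq \<alpha>_def algebra_simps)
  finally show ?thesis
    using putf_ge_affine[OF \<mu>, of k] E_le_putf[OF \<mu> \<nu> E, of k] by (simp add: b_def m_def)
qed

lemma ex_level_bary: "\<exists>p. 0 \<le> p \<and> p \<le> \<alpha> \<and> bary_levels p = b"
  using IVT2'[of bary_levels \<alpha> b 0, OF bary_levels_\<alpha> bary_levels_0 _ continuous_bary_levels] \<alpha>_\<delta> by auto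

lemma minorant_le_putf_levels_outer:
  assumes p: "0 \<le> p" "p \<le> \<alpha>" "bary_levels p = b" and \<psi>: "\<And>y. \<psi> y \<le> Ptilde \<nu> \<mu> y"
  shows "0 < p \<Longrightarrow> y \<le> quantile p \<Longrightarrow> \<psi> y \<le> putf (quantile_part (levels p)) y"
    and "p < \<alpha> \<Longrightarrow> quantile (p + \<delta>) \<le> y \<Longrightarrow> \<psi> y \<le> putf (quantile_part (levels p)) y"
    and "\<psi> y \<le> putf \<nu> y + putf (quantile_part (levels p)) y"
    and "\<psi> y \<le> callf \<nu> y + putf (quantile_part (levels p)) y"
proof -
  let ?\<eta> = "quantile_part (levels p)"
  have \<psi>_put: "\<psi> y \<le> putf \<nu> y" and \<psi>_call: "\<psi> y \<le> callf \<nu> y + m * y - b"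
    using \<psi>[of y] by (simp_all add: Ptilde_def m_def b_def)
  have parity: "putf ?\<eta> y = callf ?\<eta> y + m * y - b"
    using putf_levels_parity[OF p(1,2)] p(3) by simp
  show "0 < p \<Longrightarrow> y \<le> quantile p \<Longrightarrow> \<psi> y \<le> putf ?\<eta> y"
    using putf_levels_left[OF _ p(2)] \<psi>_put by simp
  show "p < \<alpha> \<Longrightarrow> quantile (p + \<delta>) \<le> y \<Longrightarrow> \<psi> y \<le> putf ?\<eta> y"
    using callf_levels_right[OF p(1)] parity \<psi>_call by simp
  show "\<psi> y \<le> putf \<nu> y + putf ?\<eta> y"
    using \<psi>_put putf_nonneg[of ?\<eta> y] by simp
  show "\<psi> y \<le> callf \<nu> y + putf ?\<eta> y"
    using \<psi>_call parity callf_nonneg[of ?\<eta> y] by simp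
qed

lemma convex_minorant_le_putf_levels:
  assumes p: "0 \<le> p" "p \<le> \<alpha>" "bary_levels p = b"
    and \<psi>: "convex_on UNIV \<psi>" "\<And>y. \<psi> y \<le> Ptilde \<nu> \<mu> y"
  shows "\<psi> k \<le> putf (quantile_part (levels p)) k"
proof -
  let ?\<eta> = "quantile_part (levels p)" and ?a = "mass * p" and ?c = "- mass * lower_integral p"
  note outer = minorant_le_putf_levels_outer[OF p \<psi>(2)]
  have middle: "putf ?\<eta> y = ?a * y + ?c"
    if "p = 0 \<or> quantile p \<le> y" "p = \<alpha> \<or> y \<le> quantile (p + \<delta>)" for y
    using putf_levels_middle[OF p(1,2) that] by (simp add: algebra_simps)
  have gap: "quantile p \<le> quantile (p + \<delta>)" if "0 < p" "p < \<alpha>"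
    using that \<alpha>_\<delta> by (intro quantile_mono) auto
  show ?thesis
  proof (cases "(0 < p \<and> k \<le> quantile p) \<or> (p < \<alpha> \<and> quantile (p + \<delta>) \<le> k)")
    case True
    then show ?thesis using outer(1,2) by blast
  next
    case False
    then have k: "p = 0 \<or> quantile p \<le> k" "p = \<alpha> \<or> k \<le> quantile (p + \<delta>)" using p by auto
    (* compare with the affine piece at both ends of the middle region, at infinity if p = 0 or p = \<alpha> *)
    have "\<psi> k \<le> ?a * k + ?c"
    proof (rule convex_on_le_affine_approx[OF \<psi>(1)])
      fix e :: real assume e: "0 < e"
      show "\<exists>y\<le>k. \<psi> y \<le> ?a * y + ?c + e"
      proof (cases "p = 0")
        case True
        obtain y where "y \<le> k" "putf \<nu> y < e" using ex_le_putf_less[OF \<nu> e] by blast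
        then show ?thesis using outer(3)[of y] middle[of y] True k(2) by (intro exI[of _ y]) auto
      next
        case False
        then show ?thesis
          using outer(1)[of "quantile p"] middle[of "quantile p"] p k(1) gap e
          by (intro exI[of _ "quantile p"]) fastforce
      qed
      show "\<exists>z\<ge>k. \<psi> z \<le> ?a * z + ?c + e"
      proof (cases "p = \<alpha>")
        case True
        obtain z where "k \<le> z" "callf \<nu> z < e" using ex_ge_callf_less[OF \<nu> e] by blast
        then show ?thesis using outer(4)[of z] middle[of z] True k(1) by (intro exI[of _ z]) auto
      next
        case False
        then show ?thesis
          using outer(2)[of "quantile (p + \<delta>)"] middle[of "quantile (p + \<delta>)"] p k(2) gap e
          by (intro exI[of _ "quantile (p + \<delta>)"]) fastforce
      qed
    qed
    then show ?thesis using middle[OF k] by simp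
  qed
qed

lemma ex_putf_convex_env_partial_mass:
  "\<exists>\<eta>. fin_meas1 \<eta> \<and> meas_le \<eta> \<nu> \<and> measure \<eta> UNIV = measure \<mu> UNIV \<and> bary \<eta> = bary \<mu>
      \<and> putf \<eta> = convex_env (Ptilde \<nu> \<mu>)"
proof -
  obtain p where p: "0 \<le> p" "p \<le> \<alpha>" "bary_levels p = b" using ex_level_bary by blast
  let ?\<eta> = "quantile_part (levels p)"
  have mass: "measure ?\<eta> UNIV = measure \<mu> UNIV" and mean: "bary ?\<eta> = bary \<mu>"
    using measure_levels[OF p(1,2)] p(3) by (simp_all add: m_def b_def bary_levels_def)
  have "convex_env (Ptilde \<nu> \<mu>) = putf ?\<eta>"
  proof (rule convex_env_eqI[OF convex_on_putf[OF fin_meas1_levels]])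
    show "putf ?\<eta> k \<le> Ptilde \<nu> \<mu> k" for k
      using meas_le_putf_callf[OF \<nu> sets_quantile_part quantile_part_meas_le[OF levels_borel]]
      by (intro putf_le_Ptilde[OF fin_meas1_levels mass mean])
    show "\<psi> k \<le> putf ?\<eta> k" if "convex_on UNIV \<psi>" "\<And>y. \<psi> y \<le> Ptilde \<nu> \<mu> y" for \<psi> k
      by (rule convex_minorant_le_putf_levels[OF p that])
  qed
  then show ?thesis
    using fin_meas1_levels quantile_part_meas_le[OF levels_borel] mass mean by metis
qed

end

lemma putf_convex_env_null_mass:
  assumes \<mu>: "fin_meas1 \<mu>" and \<nu>: "fin_meas1 \<nu>" and E: "E_le \<mu> \<nu>" and null: "measure \<mu> UNIV = 0"
  shows "putf \<mu> = convex_env (Ptilde \<nu> \<mu>)" "meas_le \<mu> \<nu>"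
proof -
  have space_null: "emeasure \<mu> (space \<mu>) = 0"
    using null \<mu> by (simp add: finite_measure.emeasure_eq_measure fin_meas1_finite_measure fin_meas1_space)
  have AE: "AE x in \<mu>. P x" for P by (rule AE_I[of _ _ "space \<mu>"]) (auto simp: space_null)
  have put0: "putf \<mu> k = 0" for k unfolding putf_def by (rule integral_eq_zero_AE) (rule AE)
  have "bary \<mu> = 0" unfolding bary_def by (rule integral_eq_zero_AE) (rule AE)
  then have Ptilde: "Ptilde \<nu> \<mu> k = min (putf \<nu> k) (callf \<nu> k)" for k by (simp add: Ptilde_def null)
  show "meas_le \<mu> \<nu>"
    using emeasure_space[of \<mu>] space_null by (simp add: meas_le_def)
  show "putf \<mu> = convex_env (Ptilde \<nu> \<mu>)"
  proof (rule convex_env_eqI[symmetric, OF convex_on_putf[OF \<mu>]])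
    show "putf \<mu> k \<le> Ptilde \<nu> \<mu> k" for k
      using E_le_putf[OF \<mu> \<nu> E] E_le_callf[OF \<mu> \<nu> E] by (intro putf_le_Ptilde[OF \<mu>]) auto
    fix \<psi> k assume \<psi>: "convex_on UNIV \<psi>" "\<And>y. \<psi> y \<le> Ptilde \<nu> \<mu> y"
    have "\<psi> k \<le> 0 * k + 0"
    proof (rule convex_on_le_affine_approx[OF \<psi>(1)])
      fix e :: real assume e: "0 < e"
      obtain y where y: "y \<le> k" "putf \<nu> y < e" using ex_le_putf_less[OF \<nu> e] by blast
      moreover have "\<psi> y \<le> putf \<nu> y" using \<psi>(2)[of y] by (simp add: Ptilde)
      ultimately show "\<exists>y\<le>k. \<psi> y \<le> 0 * y + 0 + e" by (intro exI[of _ y]) auto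
      obtain z where z: "k \<le> z" "callf \<nu> z < e" using ex_ge_callf_less[OF \<nu> e] by blast
      moreover have "\<psi> z \<le> callf \<nu> z" using \<psi>(2)[of z] by (simp add: Ptilde)
      ultimately show "\<exists>z\<ge>k. \<psi> z \<le> 0 * z + 0 + e" by (intro exI[of _ z]) auto
    qed
    then show "\<psi> k \<le> putf \<mu> k" by (simp add: put0)
  qed
qed

lemma putf_convex_env_full_mass:
  assumes \<mu>: "fin_meas1 \<mu>" and \<nu>: "fin_meas1 \<nu>" and E: "E_le \<mu> \<nu>"
    and full: "measure \<mu> UNIV = measure \<nu> UNIV"
  shows "bary \<nu> = bary \<mu>" "putf \<nu> = convex_env (Ptilde \<nu> \<mu>)"
proof -
  show mean: "bary \<nu> = bary \<mu>"
  proof (rule antisym; rule field_le_epsilon)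
    fix e :: real assume e: "0 < e"
    obtain k where "callf \<nu> k < e" using ex_ge_callf_less[OF \<nu> e] by blast
    then show "bary \<nu> \<le> bary \<mu> + e"
      using putf_ge_affine[OF \<mu>, of k] E_le_putf[OF \<mu> \<nu> E, of k] put_call_parity[OF \<nu>, of k] full by simp
  next
    fix e :: real assume e: "0 < e"
    obtain k where "putf \<nu> k < e" using ex_le_putf_less[OF \<nu> e] by blast
    then show "bary \<mu> \<le> bary \<nu> + e"
      using callf_ge_affine[OF \<mu>, of k] E_le_callf[OF \<mu> \<nu> E, of k] put_call_parity[OF \<nu>, of k] full by simp
  qed
  show "putf \<nu> = convex_env (Ptilde \<nu> \<mu>)"
  proof (rule convex_env_eqI[symmetric, OF convex_on_putf[OF \<nu>]])
    show "putf \<nu> k \<le> Ptilde \<nu> \<mu> k" for k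
      using full mean by (intro putf_le_Ptilde[OF \<nu>]) auto
    show "\<psi> k \<le> putf \<nu> k" if "\<And>y. \<psi> y \<le> Ptilde \<nu> \<mu> y" for \<psi> k
      using that[of k] by (simp add: Ptilde_def)
  qed
qed

lemma ex_putf_convex_env:
  assumes \<mu>: "fin_meas1 \<mu>" and \<nu>: "fin_meas1 \<nu>" and E: "E_le \<mu> \<nu>"
  obtains \<eta> where "fin_meas1 \<eta>" "meas_le \<eta> \<nu>" "measure \<eta> UNIV = measure \<mu> UNIV" "bary \<eta> = bary \<mu>"
    "putf \<eta> = convex_env (Ptilde \<nu> \<mu>)"
proof -
  consider "measure \<mu> UNIV = 0" | "measure \<mu> UNIV = measure \<nu> UNIV"
    | "0 < measure \<mu> UNIV" "measure \<mu> UNIV < measure \<nu> UNIV"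
    using E_le_measure_UNIV[OF \<mu> \<nu> E] measure_nonneg[of \<mu> UNIV] by linarith
  then show ?thesis
  proof cases
    case 1
    then show ?thesis using that[OF \<mu>] putf_convex_env_null_mass[OF \<mu> \<nu> E] by blast
  next
    case 2
    then show ?thesis using that[OF \<nu>] putf_convex_env_full_mass[OF \<mu> \<nu> E] by (simp add: meas_le_def)
  next
    case 3
    interpret counter_shadow_construction \<nu> \<mu>
      using 3 \<mu> \<nu> E by unfold_locales auto
    show ?thesis using ex_putf_convex_env_partial_mass that by blast
  qed
qed

theorem theorem3p4:
  fixes \<mu> \<nu> :: "real measure"
  assumes "fin_meas1 \<mu>" and "fin_meas1 \<nu>" and "E_le \<mu> \<nu>"
  shows "putf (counter_shadow \<nu> \<mu>) = convex_env (Ptilde \<nu> \<mu>)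
    \<and> (\<forall>a b. a \<le> b \<longrightarrow> (\<exists>da db.
          ((\<lambda>y. (convex_env (Ptilde \<nu> \<mu>) y - convex_env (Ptilde \<nu> \<mu>) a) / (y - a)) \<longlongrightarrow> da) (at_right a)
        \<and> ((\<lambda>y. (convex_env (Ptilde \<nu> \<mu>) y - convex_env (Ptilde \<nu> \<mu>) b) / (y - b)) \<longlongrightarrow> db) (at_right b)
        \<and> measure (counter_shadow \<nu> \<mu>) {a<..b} = db - da))"
proof -
  obtain \<eta> where \<eta>: "fin_meas1 \<eta>" "meas_le \<eta> \<nu>" "measure \<eta> UNIV = measure \<mu> UNIV" "bary \<eta> = bary \<mu>"
    and env: "putf \<eta> = convex_env (Ptilde \<nu> \<mu>)"
    using ex_putf_convex_env[OF assms] .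
  have "counter_shadow \<nu> \<mu> = \<eta>" by (rule counter_shadow_eqI[OF assms \<eta> env])
  then show ?thesis
    unfolding env[symmetric] using measure_Ioc_eq_putf_slope_diff[OF \<eta>(1)] by simp
qed

end
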